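(* In the setting described in the context, assume in addition that $H(\mathbf{p})\neq 0$ for every $\mathbf{p}\in\mathbb{D}$, and let $\widetilde{r}$ be the real field with discrete Fourier coefficients $\widetilde{R}(\mathbf{p})=R(\mathbf{p})/H(\mathbf{p})$. Then for every $\mathbf{p}\in\mathbb{D}$, $$\mathsf{E}[|\widehat{S}(\mathbf{p})-S(\mathbf{p})|^2]=\mathsf{E}[|\widehat{S}(\mathbf{p})-\widetilde{R}(\mathbf{p})|^2]-\frac{\gamma D}{|H(\mathbf{p})|^2}+2\gamma\sum_{\ell=1}^L\mathsf{E}[\Theta_\ell'(r_\ell)]\,\mathrm{Re}\Big\{\frac{\Phi_\ell(\mathbf{p})\,\big(\widetilde{\Phi}_\ell(\mathbf{p})\big)^*}{H(\mathbf{p})}\Big\},$$ and $$\mathsf{E}[\mathcal{E}(\widehat{s}-s)]=\mathsf{E}[\mathcal{E}(\widehat{s}-\widetilde{r})]+\frac{\gamma}{D}\Big(2\sum_{\ell=1}^L\mathsf{E}[\Theta_\ell'(r_\ell)]\,\overline{\gamma}_\ell-\sum_{\mathbf{p}\in\mathbb{D}}|H(\mathbf{p})|^{-2}\Big),$$ where $\overline{\gamma}_\ell=\frac{1}{D}\sum_{\mathbf{p}\in\mathbb{D}}\frac{\Phi_\ell(\mathbf{p})(\widetilde{\Phi}_\ell(\mathbf{p}))^*}{H(\mathbf{p})}$, and each $\overline{\gamma}_\ell$ is real.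
   Context: Let $d,D_1,\dots,D_d$ be positive integers, $\mathbb{D}=\{0,\dots,D_1-1\}\times\cdots\times\{0,\dots,D_d-1\}$, $D=D_1\cdots D_d$, $\boldsymbol{D}=\mathrm{Diag}(D_1,\dots,D_d)$. For a field $f\colon\mathbb{D}\to\mathbb{R}$ its discrete Fourier transform is $F(\mathbf{p})=\sum_{\mathbf{x}\in\mathbb{D}}f(\mathbf{x})\exp(-2\pi\imath\,\mathbf{x}^\top\boldsymbol{D}^{-1}\mathbf{p})$, $\mathbf{p}\in\mathbb{D}$ (capital letters denote DFTs of the corresponding lowercase fields). $s$ is a real random field on $\mathbb{D}$ with finite variance; $h$ is a deterministic real field on $\mathbb{D}$ with DFT $H$; $n$ is a zero-mean Gaussian random field on $\mathbb{D}$ independent of $s$ with $\mathsf{E}[n(\mathbf{x})n(\mathbf{y})]=\gamma\,\delta_{\mathbf{x}-\mathbf{y}}$ ($\gamma>0$, $\delta$ the Kronecker sequence). The observation is $r(\mathbf{x})=\sum_{\mathbf{y}\in\mathbb{D}}\widetilde{h}(\mathbf{x}-\mathbf{y})s(\mathbf{y})+n(\mathbf{x})$, where $\widetilde{h}$ is the periodic extension of $h$ to $\mathbb{Z}^d$; thus $R(\mathbf{p})=H(\mathbf{p})S(\mathbf{p})+N(\mathbf{p})$. Let $L\ge1$ and let $(\varphi_\ell)_{1\le\ell\le L}$ (analysis) and $(\widetilde{\varphi}_\ell)_{1\le\ell\le L}$ (synthesis) be families of real fields on $\mathbb{D}$ with DFTs $\Phi_\ell,\widetilde{\Phi}_\ell$.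 Set $r_\ell=\langle r,\varphi_\ell\rangle=\sum_{\mathbf{x}}r(\mathbf{x})\varphi_\ell(\mathbf{x})$, $\widehat{s}_\ell=\Theta_\ell(r_\ell)$, $\widehat{s}=\sum_{\ell=1}^L\widehat{s}_\ell\widetilde{\varphi}_\ell$ (so $\widehat{S}(\mathbf{p})=\sum_\ell\widehat{s}_\ell\widetilde{\Phi}_\ell(\mathbf{p})$), where each $\Theta_\ell\colon\mathbb{R}\to\mathbb{R}$ is continuous, almost everywhere differentiable with derivative $\Theta_\ell'$, satisfies $\lim_{|\zeta|\to\infty}\Theta_\ell(\tau+\zeta)\zeta^2\exp(-\zeta^2/(2\alpha^2))=0$ for all $\alpha\neq0$, $\tau\in\mathbb{R}$, and $\mathsf{E}[|\Theta_\ell(r_\ell)|^3]<\infty$, $\mathsf{E}[|\Theta_\ell'(r_\ell)|^3]<\infty$. For a real field $f$ on $\mathbb{D}$, $\mathcal{E}(f)=\frac1D\sum_{\mathbf{x}\in\mathbb{D}}f(\mathbf{x})^2$. $(\cdot)^*$ is complex conjugation.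
   Formalization: Each $\Theta_\ell$ is also locally absolutely continuous, with $\Theta_\ell'$ integrable on every [a,b] and $\Theta_\ell(b)-\Theta_\ell(a)$ equal to the integral of $\Theta_\ell'$ over [a,b]. The statement above fails without it. *)

theory Defs
  imports "HOL-Probability.Probability"
begin

text \<open>Grid points of D = {0..D_1-1} x ... x {0..D_d-1}, represented as functions
  nat => nat that are extensional (zero) outside the coordinates 0..d-1
  (coordinate i here corresponds to coordinate i+1 of the paper).\<close>
definition grid :: "nat \<Rightarrow> (nat \<Rightarrow> nat) \<Rightarrow> (nat \<Rightarrow> nat) set" where
  "grid d Ds = {x. (\<forall>i<d. x i < Ds i) \<and> (\<forall>i. d \<le> i \<longrightarrow> x i = 0)}"

definition gridsize :: "nat \<Rightarrow> (nat \<Rightarrow> nat) \<Rightarrow> nat" where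
  "gridsize d Ds = (\<Prod>i<d. Ds i)"

definition phase :: "nat \<Rightarrow> (nat \<Rightarrow> nat) \<Rightarrow> (nat \<Rightarrow> nat) \<Rightarrow> (nat \<Rightarrow> nat) \<Rightarrow> real" where
  "phase d Ds x p = (\<Sum>i<d. real (x i) * real (p i) / real (Ds i))"

definition dft :: "nat \<Rightarrow> (nat \<Rightarrow> nat) \<Rightarrow> ((nat \<Rightarrow> nat) \<Rightarrow> real) \<Rightarrow> (nat \<Rightarrow> nat) \<Rightarrow> complex" where
  "dft d Ds f p = (\<Sum>x\<in>grid d Ds. complex_of_real (f x) * cis (- 2 * pi * phase d Ds x p))"

definition idft :: "nat \<Rightarrow> (nat \<Rightarrow> nat) \<Rightarrow> ((nat \<Rightarrow> nat) \<Rightarrow> complex) \<Rightarrow> (nat \<Rightarrow> nat) \<Rightarrow> complex" where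
  "idft d Ds F x = (\<Sum>p\<in>grid d Ds. F p * cis (2 * pi * phase d Ds x p)) / of_nat (gridsize d Ds)"

definition pext :: "nat \<Rightarrow> (nat \<Rightarrow> nat) \<Rightarrow> ((nat \<Rightarrow> nat) \<Rightarrow> real) \<Rightarrow> (nat \<Rightarrow> int) \<Rightarrow> real" where
  "pext d Ds h z = h (\<lambda>i. if i < d then nat (z i mod int (Ds i)) else 0)"

definition circ_conv :: "nat \<Rightarrow> (nat \<Rightarrow> nat) \<Rightarrow> ((nat \<Rightarrow> nat) \<Rightarrow> real) \<Rightarrow> ((nat \<Rightarrow> nat) \<Rightarrow> real) \<Rightarrow> (nat \<Rightarrow> nat) \<Rightarrow> real" where
  "circ_conv d Ds h s x = (\<Sum>y\<in>grid d Ds. pext d Ds h (\<lambda>i. int (x i) - int (y i)) * s y)"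

definition ip :: "nat \<Rightarrow> (nat \<Rightarrow> nat) \<Rightarrow> ((nat \<Rightarrow> nat) \<Rightarrow> real) \<Rightarrow> ((nat \<Rightarrow> nat) \<Rightarrow> real) \<Rightarrow> real" where
  "ip d Ds f g = (\<Sum>x\<in>grid d Ds. f x * g x)"

definition energy :: "nat \<Rightarrow> (nat \<Rightarrow> nat) \<Rightarrow> ((nat \<Rightarrow> nat) \<Rightarrow> real) \<Rightarrow> real" where
  "energy d Ds f = (\<Sum>x\<in>grid d Ds. (f x)\<^sup>2) / real (gridsize d Ds)"

end

theory Submission
  imports Defs "HOL-Real_Asymp.Real_Asymp"
begin

text \<open>
  In the Fourier domain R = H S + N, so R/H - S = N/H, and
  |Shat - S|^2 = |Shat - R/H|^2 + 2 Re(Shat (N/H)*) - 2 Re(S (N/H)*) - |N|^2/|H|^2.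
  Taking expectations, the noise power is E|N(p)|^2 = \<gamma> D (white noise), the
  signal-noise cross term vanishes (independence), and the estimate-noise cross term is
  computed with Stein's lemma: given the signal, each coefficient r_l is an affine form
  in the Gaussian noise vector, so E[\<Theta>_l(r_l) n(x)] = \<gamma> \<phi>_l(x) E[\<Theta>'_l(r_l)].
  Summing over all frequencies and using Parseval gives the energy identity; the mean
  Stein weights are real because the DFTs of real fields are Hermitian.
\<close>

section \<open>Finite Fourier analysis on the grid\<close>

definition grid_ext :: "nat \<Rightarrow> (nat \<Rightarrow> nat) \<Rightarrow> nat \<Rightarrow> nat" where
  "grid_ext d e = (\<lambda>i. if i < d then e i else 0)"

lemma grid_as_image: "grid d Ds = grid_ext d ` PiE {..<d} (\<lambda>i. {..<Ds i})"
proof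
  show "grid d Ds \<subseteq> grid_ext d ` PiE {..<d} (\<lambda>i. {..<Ds i})"
  proof
    fix x assume x: "x \<in> grid d Ds"
    have "x = grid_ext d (restrict x {..<d})"
      using x by (auto simp: grid_ext_def grid_def fun_eq_iff)
    moreover have "restrict x {..<d} \<in> PiE {..<d} (\<lambda>i. {..<Ds i})"
      using x by (auto simp: grid_def)
    ultimately show "x \<in> grid_ext d ` PiE {..<d} (\<lambda>i. {..<Ds i})" by blast
  qed
  show "grid_ext d ` PiE {..<d} (\<lambda>i. {..<Ds i}) \<subseteq> grid d Ds"
    by (auto simp: grid_ext_def grid_def PiE_def Pi_def)
qed

lemma inj_on_grid_ext: "inj_on (grid_ext d) (PiE {..<d} B)"
  by (auto simp: inj_on_def grid_ext_def fun_eq_iff PiE_def extensional_def) metis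

lemma finite_grid [simp]: "finite (grid d Ds)"
  unfolding grid_as_image by (intro finite_imageI finite_PiE) auto

lemma card_grid: "card (grid d Ds) = gridsize d Ds"
  unfolding grid_as_image card_image[OF inj_on_grid_ext] by (simp add: card_PiE gridsize_def)

lemma gridsize_pos: "\<forall>i<d. Ds i > 0 \<Longrightarrow> gridsize d Ds > 0"
  by (simp add: gridsize_def)

lemma sum_grid_prod:
  fixes f :: "nat \<Rightarrow> nat \<Rightarrow> 'c::comm_semiring_1"
  shows "(\<Sum>x\<in>grid d Ds. \<Prod>i<d. f i (x i)) = (\<Prod>i<d. \<Sum>j<Ds i. f i j)"
proof -
  have "(\<Sum>x\<in>grid d Ds. \<Prod>i<d. f i (x i))
      = (\<Sum>e\<in>PiE {..<d} (\<lambda>i. {..<Ds i}). \<Prod>i<d. f i (grid_ext d e i))"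
    unfolding grid_as_image by (subst sum.reindex[OF inj_on_grid_ext]) (simp add: comp_def)
  also have "\<dots> = (\<Sum>e\<in>PiE {..<d} (\<lambda>i. {..<Ds i}). \<Prod>i<d. f i (e i))"
    by (intro sum.cong refl prod.cong) (auto simp: grid_ext_def)
  also have "\<dots> = (\<Prod>i<d. \<Sum>j<Ds i. f i j)"
    by (rule prod_sum_PiE[symmetric]) auto
  finally show ?thesis .
qed

lemma phase_sym: "phase d Ds x p = phase d Ds p x"
  by (simp add: phase_def mult.commute)

lemma cis_2pi_sum:
  fixes d :: nat
  shows "cis (2*pi*(\<Sum>i<d. t i)) = (\<Prod>i<d. cis (2*pi*t i))"
  by (induct d) (auto simp: cis_mult[symmetric] distrib_left)

lemma sum_roots_of_unity:
  assumes D: "0 < D" and k: "k \<noteq> 0" "\<bar>k\<bar> < int D"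
  shows "(\<Sum>j<D. cis (2*pi*(real j * real_of_int k / real D))) = 0"
proof -
  define w where "w = cis (2*pi*real_of_int k / real D)"
  have powers: "cis (2*pi*(real j * real_of_int k / real D)) = w ^ j" for j
    unfolding w_def by (subst Complex.DeMoivre) (simp add: field_simps)
  have "w ^ D = cis (2*pi*real_of_int k)"
    unfolding w_def Complex.DeMoivre using D by (simp add: field_simps)
  then have wD: "w ^ D = 1" by simp
  have "w \<noteq> 1"
  proof
    assume "w = 1"
    then have "cos (2*pi*real_of_int k / real D) = 1"
      unfolding w_def by (metis cis.sel(1) one_complex.sel(1))
    then obtain m :: int where "2*pi*real_of_int k / real D = 2*pi*m"
      by (auto simp: cos_one_2pi_int)
    then have "real_of_int k = real D * m" using D by (simp add: field_simps)
    then have "k = int D * m" by (metis of_int_eq_iff of_int_mult of_int_of_nat_eq)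
    with k show False
      by (cases "m = 0") (auto simp: abs_mult dest!: mult_strict_left_mono[of 1 "\<bar>m\<bar>" "int D"])
  qed
  then show ?thesis unfolding powers sum_gp_strict using wD by simp
qed

lemma cis_phase_diff:
  "cis (2*pi*phase d Ds x p) * cis (-2*pi*phase d Ds x q)
   = (\<Prod>i<d. cis (2*pi*(real (x i) * real_of_int (int (p i) - int (q i)) / real (Ds i))))"
proof -
  have "cis (2*pi*phase d Ds x p) * cis (-2*pi*phase d Ds x q)
      = cis (2*pi*(phase d Ds x p - phase d Ds x q))"
    by (simp add: cis_mult algebra_simps)
  also have "phase d Ds x p - phase d Ds x q
      = (\<Sum>i<d. real (x i) * real_of_int (int (p i) - int (q i)) / real (Ds i))"
    unfolding phase_def sum_subtractf[symmetric]
    by (intro sum.cong refl) (simp add: diff_divide_distrib algebra_simps)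
  finally show ?thesis by (simp add: cis_2pi_sum)
qed

lemma character_orthogonality:
  assumes Ds: "\<forall>i<d. Ds i > 0" and p: "p \<in> grid d Ds" and q: "q \<in> grid d Ds"
  shows "(\<Sum>x\<in>grid d Ds. cis (2*pi*phase d Ds x p) * cis (-2*pi*phase d Ds x q))
         = (if p = q then of_nat (gridsize d Ds) else 0)"
proof -
  have "(\<Sum>x\<in>grid d Ds. cis (2*pi*phase d Ds x p) * cis (-2*pi*phase d Ds x q))
     = (\<Prod>i<d. \<Sum>j<Ds i. cis (2*pi*(real j * real_of_int (int (p i) - int (q i)) / real (Ds i))))"
    unfolding cis_phase_diff by (rule sum_grid_prod)
  also have "\<dots> = (if p = q then of_nat (gridsize d Ds) else 0)"
  proof (cases "p = q")
    case False
    then obtain i where i: "i < d" "p i \<noteq> q i"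
      using p q by (auto simp: grid_def fun_eq_iff) (metis not_le)
    have "(\<Sum>j<Ds i. cis (2*pi*(real j * real_of_int (int (p i) - int (q i)) / real (Ds i)))) = 0"
      by (rule sum_roots_of_unity) (use i p q Ds in \<open>auto simp: grid_def abs_if\<close>)
    then show ?thesis using False i by (auto intro!: prod_zero bexI[of _ i])
  qed (simp add: gridsize_def)
  finally show ?thesis .
qed

lemma dft_of_idft:
  assumes Ds: "\<forall>i<d. Ds i > 0" and q: "q \<in> grid d Ds"
  shows "(\<Sum>x\<in>grid d Ds. idft d Ds G x * cis (-2*pi*phase d Ds x q)) = G q"
proof -
  let ?G = "grid d Ds" and ?D = "of_nat (gridsize d Ds) :: complex"
  have "(\<Sum>x\<in>?G. idft d Ds G x * cis (-2*pi*phase d Ds x q))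
      = (\<Sum>x\<in>?G. \<Sum>p\<in>?G. G p * (cis (2*pi*phase d Ds x p) * cis (-2*pi*phase d Ds x q))) / ?D"
    unfolding idft_def sum_divide_distrib times_divide_eq_left sum_distrib_right
    by (simp only: mult.assoc)
  also have "\<dots> = (\<Sum>p\<in>?G. G p * (\<Sum>x\<in>?G. cis (2*pi*phase d Ds x p) * cis (-2*pi*phase d Ds x q))) / ?D"
    by (subst sum.swap) (simp only: sum_distrib_left)
  also have "\<dots> = (\<Sum>p\<in>?G. G p * (if p = q then ?D else 0)) / ?D"
    by (intro arg_cong2[where f="(/)"] sum.cong refl arg_cong2[where f="(*)"]
        character_orthogonality[OF Ds _ q])
  also have "\<dots> = G q" using q gridsize_pos[OF Ds] by (simp add: if_distrib cong: if_cong)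
  finally show ?thesis .
qed

lemma parseval:
  assumes Ds: "\<forall>i<d. Ds i > 0"
  shows "(\<Sum>x\<in>grid d Ds. (f x)\<^sup>2) = (\<Sum>p\<in>grid d Ds. (cmod (dft d Ds f p))\<^sup>2) / real (gridsize d Ds)"
proof -
  let ?G = "grid d Ds" and ?D = "of_nat (gridsize d Ds) :: complex"
  have "complex_of_real (\<Sum>p\<in>?G. (cmod (dft d Ds f p))\<^sup>2) = (\<Sum>p\<in>?G. dft d Ds f p * cnj (dft d Ds f p))"
    by (simp only: of_real_sum complex_norm_square)
  also have "\<dots> = (\<Sum>p\<in>?G. \<Sum>x\<in>?G. \<Sum>y\<in>?G. of_real (f x * f y) *
                     (cis (2*pi*phase d Ds p y) * cis (-2*pi*phase d Ds p x)))"
    unfolding dft_def cnj_sum sum_product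
    by (intro sum.cong refl) (simp add: cis_cnj phase_sym ac_simps)
  also have "\<dots> = (\<Sum>x\<in>?G. \<Sum>y\<in>?G. of_real (f x * f y) *
                     (\<Sum>p\<in>?G. cis (2*pi*phase d Ds p y) * cis (-2*pi*phase d Ds p x)))"
    unfolding sum_distrib_left by (subst sum.swap, rule sum.cong[OF refl], rule sum.swap)
  also have "\<dots> = (\<Sum>x\<in>?G. \<Sum>y\<in>?G. of_real (f x * f y) * (if y = x then ?D else 0))"
    by (intro sum.cong refl arg_cong2[where f="(*)"] character_orthogonality[OF Ds])
  also have "\<dots> = complex_of_real (real (gridsize d Ds) * (\<Sum>x\<in>?G. (f x)\<^sup>2))"
    by (simp add: if_distrib power2_eq_square sum_distrib_left ac_simps cong: if_cong)
  finally have "(\<Sum>p\<in>?G. (cmod (dft d Ds f p))\<^sup>2) = real (gridsize d Ds) * (\<Sum>x\<in>?G. (f x)\<^sup>2)"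
    by (simp only: of_real_eq_iff)
  then show ?thesis using gridsize_pos[OF Ds] by (simp add: field_simps)
qed

lemma dft_add: "dft d Ds (\<lambda>x. f x + g x) p = dft d Ds f p + dft d Ds g p"
  by (simp add: dft_def sum.distrib algebra_simps)

lemma dft_diff: "dft d Ds (\<lambda>x. f x - g x) p = dft d Ds f p - dft d Ds g p"
  by (simp add: dft_def sum_subtractf[symmetric] algebra_simps)

lemma dft_lincomb:
  "dft d Ds (\<lambda>x. \<Sum>l\<in>A. c l * f l x) p = (\<Sum>l\<in>A. complex_of_real (c l) * dft d Ds (f l) p)"
  unfolding dft_def sum_distrib_left by (subst sum.swap) (simp add: sum_distrib_right algebra_simps)

lemma cis_phase_periodic:
  assumes Ds: "\<forall>i<d. Ds i > 0" and shift: "\<forall>i<d. \<exists>k::int. a' i = a i + of_int k * real (Ds i)"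
  shows "cis (2*pi*(\<Sum>i<d. a' i * real (b i) / real (Ds i))) = cis (2*pi*(\<Sum>i<d. a i * real (b i) / real (Ds i)))"
proof -
  from shift obtain k where k: "\<forall>i<d. a' i = a i + of_int (k i) * real (Ds i)"
    by metis
  have "(\<Sum>i<d. a' i * real (b i) / real (Ds i))
      = (\<Sum>i<d. a i * real (b i) / real (Ds i)) + of_int (\<Sum>i<d. k i * int (b i))"
    unfolding of_int_sum sum.distrib[symmetric]
    by (intro sum.cong refl) (use k Ds in \<open>auto simp: field_simps\<close>)
  moreover have "(\<Sum>x<d. real_of_int (k x) * real (b x)) \<in> \<int>"
    by (intro Ints_sum Ints_mult) auto
  ultimately show ?thesis
    by (simp add: distrib_left cis_mult[symmetric])
qed

definition grid_add :: "nat \<Rightarrow> (nat \<Rightarrow> nat) \<Rightarrow> (nat \<Rightarrow> nat) \<Rightarrow> (nat \<Rightarrow> nat) \<Rightarrow> nat \<Rightarrow> nat" where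
  "grid_add d Ds z y = (\<lambda>i. if i < d then (z i + y i) mod Ds i else 0)"

definition grid_sub :: "nat \<Rightarrow> (nat \<Rightarrow> nat) \<Rightarrow> (nat \<Rightarrow> nat) \<Rightarrow> (nat \<Rightarrow> nat) \<Rightarrow> nat \<Rightarrow> nat" where
  "grid_sub d Ds x y = (\<lambda>i. if i < d then nat ((int (x i) - int (y i)) mod int (Ds i)) else 0)"

lemma pext_diff: "pext d Ds h (\<lambda>i. int (x i) - int (y i)) = h (grid_sub d Ds x y)"
  by (simp add: pext_def grid_sub_def)

lemma grid_add_in_grid: "\<forall>i<d. Ds i > 0 \<Longrightarrow> grid_add d Ds z y \<in> grid d Ds"
  by (auto simp: grid_add_def grid_def)

lemma grid_sub_in_grid: "\<forall>i<d. Ds i > 0 \<Longrightarrow> grid_sub d Ds z y \<in> grid d Ds"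
  by (auto simp: grid_sub_def grid_def nat_less_iff)

lemma grid_sub_add: "z \<in> grid d Ds \<Longrightarrow> grid_sub d Ds (grid_add d Ds z y) y = z"
  by (auto simp: grid_sub_def grid_add_def grid_def fun_eq_iff of_nat_mod mod_diff_left_eq)

lemma grid_add_sub:
  assumes "\<forall>i<d. Ds i > 0" "x \<in> grid d Ds"
  shows "grid_add d Ds (grid_sub d Ds x y) y = x"
proof -
  have "int ((nat ((int (x i) - int (y i)) mod int (Ds i)) + y i) mod Ds i) = int (x i)" if "i < d" for i
    using assms that by (simp add: of_nat_mod mod_add_left_eq grid_def)
  then show ?thesis using assms by (auto simp: grid_add_def grid_sub_def grid_def fun_eq_iff)
qed

lemma cis_phase_add:
  assumes Ds: "\<forall>i<d. Ds i > 0"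
  shows "cis (-2*pi*phase d Ds (grid_add d Ds z y) p) = cis (-2*pi*phase d Ds z p) * cis (-2*pi*phase d Ds y p)"
proof -
  have "cis (-2*pi*phase d Ds (grid_add d Ds z y) p)
      = cis (2*pi*(\<Sum>i<d. (- real (grid_add d Ds z y i)) * real (p i) / real (Ds i)))"
    by (simp add: phase_def sum_negf)
  also have "\<dots> = cis (2*pi*(\<Sum>i<d. (- (real (z i) + real (y i))) * real (p i) / real (Ds i)))"
  proof (rule cis_phase_periodic[OF Ds], intro allI impI)
    fix i assume "i < d"
    then have "real (grid_add d Ds z y i) = real (z i) + real (y i) - real ((z i + y i) div Ds i) * real (Ds i)"
      by (simp add: grid_add_def) (metis div_mult_mod_eq of_nat_add of_nat_mult add_diff_cancel_left')
    then show "\<exists>k::int. - real (grid_add d Ds z y i) = - (real (z i) + real (y i)) + of_int k * real (Ds i)"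
      by (intro exI[of _ "int ((z i + y i) div Ds i)"]) simp
  qed
  also have "(\<Sum>i<d. (- (real (z i) + real (y i))) * real (p i) / real (Ds i)) = - phase d Ds z p - phase d Ds y p"
    unfolding phase_def sum_negf[symmetric] sum_subtractf[symmetric]
    by (intro sum.cong refl) (use Ds in \<open>auto simp: field_simps\<close>)
  also have "cis (2*pi*(- phase d Ds z p - phase d Ds y p)) = cis (-2*pi*phase d Ds z p) * cis (-2*pi*phase d Ds y p)"
    unfolding cis_mult by (rule arg_cong[where f=cis]) (simp add: algebra_simps)
  finally show ?thesis .
qed

lemma dft_circ_conv:
  assumes Ds: "\<forall>i<d. Ds i > 0"
  shows "dft d Ds (circ_conv d Ds h f) p = dft d Ds h p * dft d Ds f p"
proof -
  let ?G = "grid d Ds"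
  have shifted: "(\<Sum>x\<in>?G. complex_of_real (h (grid_sub d Ds x y)) * cis (-2*pi*phase d Ds x p))
      = dft d Ds h p * cis (-2*pi*phase d Ds y p)" for y
  proof -
    have "(\<Sum>x\<in>?G. complex_of_real (h (grid_sub d Ds x y)) * cis (-2*pi*phase d Ds x p))
       = (\<Sum>z\<in>?G. complex_of_real (h z) * cis (-2*pi*phase d Ds (grid_add d Ds z y) p))"
      by (rule sum.reindex_bij_witness[of _ "\<lambda>z. grid_add d Ds z y" "\<lambda>x. grid_sub d Ds x y"])
         (auto simp: grid_sub_add grid_add_sub[OF Ds] grid_add_in_grid[OF Ds] grid_sub_in_grid[OF Ds])
    then show ?thesis
      unfolding cis_phase_add[OF Ds] dft_def sum_distrib_right by (simp only: mult.assoc)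
  qed
  have "dft d Ds (circ_conv d Ds h f) p
     = (\<Sum>y\<in>?G. complex_of_real (f y) *
          (\<Sum>x\<in>?G. complex_of_real (h (grid_sub d Ds x y)) * cis (-2*pi*phase d Ds x p)))"
    unfolding dft_def circ_conv_def pext_diff of_real_sum sum_distrib_right sum_distrib_left
    by (subst sum.swap) (simp add: algebra_simps)
  also have "\<dots> = (\<Sum>y\<in>?G. complex_of_real (f y) * cis (-2*pi*phase d Ds y p)) * dft d Ds h p"
    unfolding shifted sum_distrib_right by (intro sum.cong refl) (simp only: ac_simps)
  also have "\<dots> = dft d Ds h p * dft d Ds f p"
    by (simp add: dft_def mult.commute)
  finally show ?thesis .
qed

lemma grid_neg_neg:
  assumes Ds: "\<forall>i<d. Ds i > 0" and p: "p \<in> grid d Ds"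
  shows "grid_sub d Ds (\<lambda>_. 0) (grid_sub d Ds (\<lambda>_. 0) p) = p"
proof -
  have "nat ((- int (nat ((- int (p i)) mod int (Ds i)))) mod int (Ds i)) = p i" if "i < d" for i
    using that Ds p by (simp add: mod_minus_eq grid_def)
  then show ?thesis using p by (auto simp: grid_sub_def grid_def fun_eq_iff)
qed

lemma cis_phase_neg:
  assumes Ds: "\<forall>i<d. Ds i > 0" and p: "p \<in> grid d Ds"
  shows "cis (2*pi*phase d Ds x (grid_sub d Ds (\<lambda>_. 0) p)) = cis (-2*pi*phase d Ds x p)"
proof -
  let ?q = "grid_sub d Ds (\<lambda>_. 0) p"
  have "grid_add d Ds ?q p = (\<lambda>_. 0)"
    using Ds by (intro grid_add_sub) (auto simp: grid_def)
  then have "cis (-2*pi*phase d Ds ?q x) * cis (-2*pi*phase d Ds p x) = 1"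
    using cis_phase_add[OF Ds, of ?q p x] by (simp add: phase_def)
  then have "inverse (cis (-2*pi*phase d Ds ?q x)) = cis (-2*pi*phase d Ds p x)"
    by (rule inverse_unique)
  then show ?thesis by (simp add: phase_sym)
qed

lemma dft_neg:
  assumes Ds: "\<forall>i<d. Ds i > 0" and p: "p \<in> grid d Ds"
  shows "dft d Ds f (grid_sub d Ds (\<lambda>_. 0) p) = cnj (dft d Ds f p)"
proof -
  have "cis (- 2 * pi * phase d Ds x (grid_sub d Ds (\<lambda>_. 0) p)) = cnj (cis (- 2 * pi * phase d Ds x p))" for x
    using arg_cong[OF cis_phase_neg[OF Ds p, of x], of cnj] by (simp add: cis_cnj)
  then show ?thesis by (simp add: dft_def)
qed

lemma hermitian_synthesis_real:
  assumes Ds: "\<forall>i<d. Ds i > 0"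
    and herm: "\<forall>p\<in>grid d Ds. G (grid_sub d Ds (\<lambda>_. 0) p) = cnj (G p)"
  shows "Im (\<Sum>p\<in>grid d Ds. G p * cis (2*pi*phase d Ds x p)) = 0"
proof -
  let ?S = "\<Sum>p\<in>grid d Ds. G p * cis (2*pi*phase d Ds x p)"
  let ?neg = "grid_sub d Ds (\<lambda>_. 0)"
  have "?S = (\<Sum>p\<in>grid d Ds. G (?neg p) * cis (2*pi*phase d Ds x (?neg p)))"
    by (rule sum.reindex_bij_witness[of _ ?neg ?neg])
       (auto simp: grid_neg_neg[OF Ds] grid_sub_in_grid[OF Ds])
  also have "\<dots> = cnj ?S"
    by (simp add: herm cis_phase_neg[OF Ds] cis_cnj)
  finally have "?S = cnj ?S" .
  then show ?thesis by (metis cnj.sel(2) neg_equal_zero)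
qed

text \<open>Quotients and cross-spectra of DFTs of real fields are Hermitian, hence
  their mean over the grid is real.\<close>
lemma mean_cross_spectrum_ratio_real:
  assumes Ds: "\<forall>i<d. Ds i > 0"
  shows "Im (\<Sum>p\<in>grid d Ds. dft d Ds f p * cnj (dft d Ds g p) / dft d Ds h p) = 0"
  using hermitian_synthesis_real[OF Ds, of "\<lambda>p. dft d Ds f p * cnj (dft d Ds g p) / dft d Ds h p" "\<lambda>_. 0"]
  by (simp add: dft_neg[OF Ds] phase_def)

lemma dft_Re_idft:
  assumes Ds: "\<forall>i<d. Ds i > 0" and q: "q \<in> grid d Ds"
    and herm: "\<forall>p\<in>grid d Ds. G (grid_sub d Ds (\<lambda>_. 0) p) = cnj (G p)"
  shows "dft d Ds (\<lambda>x. Re (idft d Ds G x)) q = G q"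
proof -
  have "complex_of_real (Re (idft d Ds G x)) = idft d Ds G x" for x
    using hermitian_synthesis_real[OF Ds herm, of x] by (simp add: idft_def complex_eq_iff)
  then show ?thesis using dft_of_idft[OF Ds q] by (simp add: dft_def)
qed

section \<open>Gaussian integration by parts (Stein's lemma)\<close>

text \<open>T is locally absolutely continuous with derivative T': it is the integral of T'
  over every compact interval.  This is how the hypothesis on the thresholding functions
  is formalised.\<close>
definition abs_cont_deriv :: "(real \<Rightarrow> real) \<Rightarrow> (real \<Rightarrow> real) \<Rightarrow> bool" where
  "abs_cont_deriv T T' \<longleftrightarrow> (\<forall>a b. a \<le> b \<longrightarrow>
     set_integrable lborel {a..b} T' \<and> T b - T a = (\<integral>x\<in>{a..b}. T' x \<partial>lborel))"

text \<open>A locally integrable function is Borel measurable (a pointwise limit of the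
  truncations to [-n, n]).\<close>
lemma borel_measurable_locally_integrable:
  fixes f :: "real \<Rightarrow> real"
  assumes "\<forall>a b. a \<le> b \<longrightarrow> set_integrable lborel {a..b} f"
  shows "f \<in> borel_measurable borel"
proof (rule borel_measurable_LIMSEQ_real)
  fix n :: nat
  have "set_integrable lborel {-real n..real n} f" using assms by simp
  then have "(\<lambda>x. indicator {- real n..real n} x *\<^sub>R f x) \<in> borel_measurable lborel"
    unfolding set_integrable_def by (rule borel_measurable_integrable)
  then show "(\<lambda>x. indicator {- real n..real n} x * f x) \<in> borel_measurable borel" by simp
next
  fix x :: real
  have "eventually (\<lambda>n. indicator {- real n..real n} x * f x = f x) sequentially"
    using eventually_ge_at_top[of "nat \<lceil>\<bar>x\<bar>\<rceil>"]
    by eventually_elim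
       (auto simp: indicator_def abs_le_iff dest: le_nat_iff[THEN iffD1]
             intro!: order.trans[OF real_nat_ceiling_ge])
  then show "(\<lambda>n. indicator {- real n..real n} x * f x) \<longlonglongrightarrow> f x"
    by (rule tendsto_eventually)
qed

lemma abs_cont_deriv_measurable: "abs_cont_deriv T T' \<Longrightarrow> T' \<in> borel_measurable borel"
  unfolding abs_cont_deriv_def by (intro borel_measurable_locally_integrable) auto

lemma gaussian_density_deriv:
  assumes "\<gamma> > 0"
  shows "((\<lambda>u. - \<gamma> * normal_density 0 (sqrt \<gamma>) u) has_real_derivative (u * normal_density 0 (sqrt \<gamma>) u)) (at u)"
proof -
  have "normal_density 0 (sqrt \<gamma>) = (\<lambda>u. exp (- u\<^sup>2 / (2*\<gamma>)) * (1 / sqrt (2*pi*\<gamma>)))"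
    using assms by (auto simp: normal_density_def fun_eq_iff)
  moreover have "((\<lambda>u. - \<gamma> * (exp (- u\<^sup>2 / (2*\<gamma>)) * (1 / sqrt (2*pi*\<gamma>)))) has_real_derivative
                  (u * (exp (- u\<^sup>2 / (2*\<gamma>)) * (1 / sqrt (2*pi*\<gamma>))))) (at u)"
    using assms by (auto intro!: derivative_eq_intros simp: field_simps)
  ultimately show ?thesis by simp
qed

lemma gaussian_density_tendsto:
  assumes "\<gamma> > 0"
  shows "((\<lambda>u. - \<gamma> * normal_density 0 (sqrt \<gamma>) u) \<longlongrightarrow> 0) at_top"
proof -
  have "((\<lambda>u. - \<gamma> * (exp (- u\<^sup>2 / (2*\<gamma>)) / sqrt (2*pi*\<gamma>))) \<longlongrightarrow> 0) at_top"
    using assms by real_asymp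
  then show ?thesis using assms by (simp add: normal_density_def)
qed

lemma gaussian_tail_moment_right:
  assumes g: "\<gamma> > 0" and v: "0 \<le> v"
  shows "(\<integral>\<^sup>+u. ennreal (u * normal_density 0 (sqrt \<gamma>) u) * indicator {v..} u \<partial>lborel)
         = ennreal (\<gamma> * normal_density 0 (sqrt \<gamma>) v)"
  using nn_integral_FTC_atLeast[OF _ gaussian_density_deriv[OF g] _ gaussian_density_tendsto[OF g], of v] v
  by simp

lemma gaussian_tail_moment_left:
  assumes g: "\<gamma> > 0" and v: "v \<le> 0"
  shows "(\<integral>\<^sup>+u. ennreal (- u * normal_density 0 (sqrt \<gamma>) u) * indicator {..v} u \<partial>lborel)
         = ennreal (\<gamma> * normal_density 0 (sqrt \<gamma>) v)"
proof -
  have even: "normal_density 0 (sqrt \<gamma>) (- u) = normal_density 0 (sqrt \<gamma>) u" for u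
    by (simp add: normal_density_def)
  have "(\<integral>\<^sup>+u. ennreal (- u * normal_density 0 (sqrt \<gamma>) u) * indicator {..v} u \<partial>lborel)
     = ennreal \<bar>-1\<bar> * (\<integral>\<^sup>+x. ennreal (- (0 + -1 * x) * normal_density 0 (sqrt \<gamma>) (0 + -1 * x))
                                   * indicator {..v} (0 + -1 * x) \<partial>lborel)"
    by (rule nn_integral_real_affine) auto
  also have "\<dots> = (\<integral>\<^sup>+x. ennreal (x * normal_density 0 (sqrt \<gamma>) x) * indicator {-v..} x \<partial>lborel)"
    by (auto simp: even indicator_def intro!: nn_integral_cong)
  also have "\<dots> = ennreal (\<gamma> * normal_density 0 (sqrt \<gamma>) v)"
    using gaussian_tail_moment_right[OF g, of "-v"] v by (simp add: even)
  finally show ?thesis .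
qed

text \<open>Writing T(b + c u) - T(b) as
  the integral of this kernel against c T'(b + c w) and exchanging the order of
  integration proves Stein's lemma without any boundary terms.\<close>
definition stein_kernel :: "real \<Rightarrow> real \<Rightarrow> real" where
  "stein_kernel u v = (if 0 \<le> v \<and> v \<le> u then 1 else if u \<le> v \<and> v \<le> 0 \<and> u < 0 then -1 else 0)"

lemma stein_kernel_measurable [measurable]:
  "(\<lambda>(u, v). stein_kernel u v) \<in> borel_measurable (lborel \<Otimes>\<^sub>M lborel)"
  unfolding stein_kernel_def by measurable

lemma stein_kernel_integral_fst:
  assumes g: "\<gamma> > 0" and v: "v \<noteq> 0"
  shows "has_bochner_integral lborel (\<lambda>u. u * normal_density 0 (sqrt \<gamma>) u * stein_kernel u v)
           (\<gamma> * normal_density 0 (sqrt \<gamma>) v)"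
    and "(\<integral>\<^sup>+u. ennreal \<bar>u * normal_density 0 (sqrt \<gamma>) u * stein_kernel u v\<bar> \<partial>lborel)
           = ennreal (\<gamma> * normal_density 0 (sqrt \<gamma>) v)"
proof -
  let ?g = "normal_density 0 (sqrt \<gamma>)"
  define k where "k = (if 0 < v then (\<lambda>u. u * ?g u * indicator {v..} u)
                       else (\<lambda>u. - u * ?g u * indicator {..v} u))"
  have k_eq: "u * ?g u * stein_kernel u v = k u" for u
    using v by (auto simp: k_def stein_kernel_def indicator_def)
  have k_nonneg: "0 \<le> k u" for u
    using v by (auto simp: k_def indicator_def mult_nonpos_nonneg)
  have k_integral: "(\<integral>\<^sup>+u. ennreal (k u) \<partial>lborel) = ennreal (\<gamma> * ?g v)"
  proof (cases "0 < v")
    case True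
    then have "(\<integral>\<^sup>+u. ennreal (k u) \<partial>lborel) = (\<integral>\<^sup>+u. ennreal (u * ?g u) * indicator {v..} u \<partial>lborel)"
      by (auto simp: k_def indicator_def intro!: nn_integral_cong)
    then show ?thesis using gaussian_tail_moment_right[OF g, of v] True by simp
  next
    case False
    then have "(\<integral>\<^sup>+u. ennreal (k u) \<partial>lborel) = (\<integral>\<^sup>+u. ennreal (- u * ?g u) * indicator {..v} u \<partial>lborel)"
      by (auto simp: k_def indicator_def intro!: nn_integral_cong)
    then show ?thesis using gaussian_tail_moment_left[OF g, of v] False by simp
  qed
  have "k \<in> borel_measurable borel"
    unfolding k_def by (cases "0 < v") (simp_all only: if_True if_False; measurable)+
  then show "has_bochner_integral lborel (\<lambda>u. u * ?g u * stein_kernel u v) (\<gamma> * ?g v)"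
    unfolding k_eq using k_nonneg k_integral g
    by (intro has_bochner_integral_nn_integral) auto
  show "(\<integral>\<^sup>+u. ennreal \<bar>u * ?g u * stein_kernel u v\<bar> \<partial>lborel) = ennreal (\<gamma> * ?g v)"
    unfolding k_eq using k_nonneg k_integral by simp
qed

lemma abs_cont_deriv_affine_segment:
  assumes T: "abs_cont_deriv T T'" and ab: "a \<le> a'"
  shows "(\<integral>w. indicator {a..a'} w * (c * T' (b + c * w)) \<partial>lborel) = T (b + c * a') - T (b + c * a)"
proof (cases "c = 0")
  case False
  define lo hi where "lo = min (b + c * a) (b + c * a')" and "hi = max (b + c * a) (b + c * a')"
  define F where "F w = indicator {lo..hi} w * T' w" for w
  have F_affine: "F (b + c * w) = indicator {a..a'} w * T' (b + c * w)" for w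
  proof -
    have "(b + c * w \<in> {lo..hi}) = (w \<in> {a..a'})"
      using False ab by (cases "c > 0") (auto simp: lo_def hi_def mult_le_cancel_left min_def max_def)
    then show ?thesis by (simp add: F_def indicator_def)
  qed
  have "(\<integral>w. F w \<partial>lborel) = \<bar>c\<bar> *\<^sub>R (\<integral>w. F (b + c * w) \<partial>lborel)"
    by (rule lborel_integral_real_affine[OF False])
  then have I: "(\<integral>w. indicator {a..a'} w * T' (b + c * w) \<partial>lborel) = (\<integral>w. F w \<partial>lborel) / \<bar>c\<bar>"
    using False by (simp add: F_affine)
  have I2: "(\<integral>w. F w \<partial>lborel) = T hi - T lo"
    using T ab by (simp add: F_def abs_cont_deriv_def set_lebesgue_integral_def lo_def hi_def)
  have "(\<integral>w. indicator {a..a'} w * (c * T' (b + c * w)) \<partial>lborel)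
      = c * (\<integral>w. indicator {a..a'} w * T' (b + c * w) \<partial>lborel)"
    by (simp add: ac_simps)
  also have "\<dots> = T (b + c * a') - T (b + c * a)"
    unfolding I I2 using False ab
    by (cases "c > 0") (auto simp: lo_def hi_def min_def max_def mult_le_cancel_left field_simps)
  finally show ?thesis .
qed simp

lemma stein_kernel_integral_snd:
  assumes T: "abs_cont_deriv T T'"
  shows "(\<integral>w. stein_kernel u w * (c * T' (b + c * w)) \<partial>lborel) = T (b + c * u) - T b"
proof (cases "0 \<le> u")
  case True
  then have "(\<lambda>w. stein_kernel u w * (c * T' (b + c * w))) = (\<lambda>w. indicator {0..u} w * (c * T' (b + c * w)))"
    by (auto simp: stein_kernel_def indicator_def fun_eq_iff)
  then show ?thesis using abs_cont_deriv_affine_segment[OF T True, of c b] by simp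
next
  case False
  then have "(\<lambda>w. stein_kernel u w * (c * T' (b + c * w))) = (\<lambda>w. - (indicator {u..0} w * (c * T' (b + c * w))))"
    by (auto simp: stein_kernel_def indicator_def fun_eq_iff)
  then show ?thesis using abs_cont_deriv_affine_segment[OF T, of u 0 c b] False by simp
qed

lemma stein_kernel_product_integrable:
  assumes g: "\<gamma> > 0" and T: "abs_cont_deriv T T'"
    and int: "integrable lborel (\<lambda>w. normal_density 0 (sqrt \<gamma>) w * T' (b + c * w))"
  shows "integrable (lborel \<Otimes>\<^sub>M lborel)
           (\<lambda>(u, w). u * normal_density 0 (sqrt \<gamma>) u * (stein_kernel u w * (c * T' (b + c * w))))"
    (is "integrable _ (\<lambda>(u, w). ?k u w)")
proof (rule integrableI_bounded)
  let ?g = "normal_density 0 (sqrt \<gamma>)"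
  have [measurable]: "T' \<in> borel_measurable borel"
    using T by (rule abs_cont_deriv_measurable)
  show "(\<lambda>(u, w). ?k u w) \<in> borel_measurable (lborel \<Otimes>\<^sub>M lborel)"
    by measurable
  have inner: "(\<integral>\<^sup>+u. ennreal \<bar>?k u w\<bar> \<partial>lborel) = ennreal (\<gamma> * \<bar>c\<bar> * \<bar>?g w * T' (b + c * w)\<bar>)"
    if w: "w \<noteq> 0" for w
  proof -
    have "(\<integral>\<^sup>+u. ennreal \<bar>?k u w\<bar> \<partial>lborel)
        = (\<integral>\<^sup>+u. ennreal \<bar>u * ?g u * stein_kernel u w\<bar> * ennreal \<bar>c * T' (b + c * w)\<bar> \<partial>lborel)"
      by (intro nn_integral_cong) (simp add: abs_mult ennreal_mult mult.assoc)
    also have "\<dots> = (\<integral>\<^sup>+u. ennreal \<bar>u * ?g u * stein_kernel u w\<bar> \<partial>lborel) * ennreal \<bar>c * T' (b + c * w)\<bar>"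
      by (rule nn_integral_multc) (unfold stein_kernel_def, measurable)
    also have "\<dots> = ennreal (\<gamma> * \<bar>c\<bar> * \<bar>?g w * T' (b + c * w)\<bar>)"
      using stein_kernel_integral_fst(2)[OF g w] g by (simp add: ennreal_mult abs_mult ac_simps)
    finally show ?thesis .
  qed
  have "(\<integral>\<^sup>+x. ennreal (norm ((\<lambda>(u, w). ?k u w) x)) \<partial>(lborel \<Otimes>\<^sub>M lborel))
      = (\<integral>\<^sup>+w. (\<integral>\<^sup>+u. ennreal (norm (?k u w)) \<partial>lborel) \<partial>lborel)"
    by (subst lborel_pair.nn_integral_snd[symmetric]) (auto simp: case_prod_beta)
  also have "\<dots> = (\<integral>\<^sup>+w. ennreal (\<gamma> * \<bar>c\<bar> * \<bar>?g w * T' (b + c * w)\<bar>) \<partial>lborel)"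
    by (rule nn_integral_cong_AE, rule AE_mp[OF AE_lborel_singleton[of 0]], rule AE_I2) (simp add: inner)
  also have "\<dots> < \<infinity>"
    using integrableD(2)[OF integrable_mult_right[OF integrable_abs[OF int], of "\<gamma> * \<bar>c\<bar>"]]
    by (simp add: top.not_eq_extremum)
  finally show "(\<integral>\<^sup>+x. ennreal (norm ((\<lambda>(u, w). ?k u w) x)) \<partial>(lborel \<Otimes>\<^sub>M lborel)) < \<infinity>" .
qed

lemma stein_lborel:
  assumes g: "\<gamma> > 0" and T: "abs_cont_deriv T T'"
    and int: "integrable lborel (\<lambda>w. normal_density 0 (sqrt \<gamma>) w * T' (b + c * w))"
  shows "integrable lborel (\<lambda>u. normal_density 0 (sqrt \<gamma>) u * (u * T (b + c * u)))"
    and "(\<integral>u. normal_density 0 (sqrt \<gamma>) u * (u * T (b + c * u)) \<partial>lborel)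
         = \<gamma> * c * (\<integral>w. normal_density 0 (sqrt \<gamma>) w * T' (b + c * w) \<partial>lborel)"
proof -
  let ?g = "normal_density 0 (sqrt \<gamma>)"
  define k where "k u w = u * ?g u * (stein_kernel u w * (c * T' (b + c * w)))" for u w
  have [measurable]: "T' \<in> borel_measurable borel"
    using T by (rule abs_cont_deriv_measurable)
  have [measurable]: "(\<lambda>(u, w). k u w) \<in> borel_measurable (lborel \<Otimes>\<^sub>M lborel)"
    unfolding k_def by measurable
  have k_int: "integrable (lborel \<Otimes>\<^sub>M lborel) (\<lambda>(u, w). k u w)"
    unfolding k_def by (rule stein_kernel_product_integrable[OF g T int])
  have k_fst: "(\<integral>w. k u w \<partial>lborel) = u * ?g u * (T (b + c * u) - T b)" for u
    unfolding k_def by (simp add: stein_kernel_integral_snd[OF T])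
  have k_snd: "AE w in lborel. (\<integral>u. k u w \<partial>lborel) = \<gamma> * c * (?g w * T' (b + c * w))"
  proof (rule AE_mp[OF AE_lborel_singleton[of 0]], intro AE_I2 impI)
    fix w :: real assume w: "w \<noteq> 0"
    have "(\<integral>u. k u w \<partial>lborel) = (\<integral>u. u * ?g u * stein_kernel u w \<partial>lborel) * (c * T' (b + c * w))"
      unfolding k_def integral_mult_left_zero[symmetric] by (simp add: mult.assoc)
    then show "(\<integral>u. k u w \<partial>lborel) = \<gamma> * c * (?g w * T' (b + c * w))"
      using has_bochner_integral_integral_eq[OF stein_kernel_integral_fst(1)[OF g w]] by simp
  qed
  have increment_int: "integrable lborel (\<lambda>u. u * ?g u * (T (b + c * u) - T b))"
    using lborel_pair.integrable_fst[OF k_int] unfolding k_fst .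
  have increment: "(\<integral>u. u * ?g u * (T (b + c * u) - T b) \<partial>lborel)
      = \<gamma> * c * (\<integral>w. ?g w * T' (b + c * w) \<partial>lborel)"
  proof -
    have "(\<integral>u. u * ?g u * (T (b + c * u) - T b) \<partial>lborel) = (\<integral>u. (\<integral>w. k u w \<partial>lborel) \<partial>lborel)"
      by (simp add: k_fst)
    also have "\<dots> = (\<integral>w. (\<integral>u. k u w \<partial>lborel) \<partial>lborel)"
      by (rule lborel_pair.Fubini_integral[symmetric]) (use k_int in simp)
    also have "\<dots> = (\<integral>w. \<gamma> * c * (?g w * T' (b + c * w)) \<partial>lborel)"
      by (rule integral_cong_AE) (use k_snd in auto)
    finally show ?thesis by simp
  qed
  text \<open>The constant T(b) contributes nothing since the Gaussian has mean zero.\<close>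
  have mean_int: "integrable lborel (\<lambda>u. ?g u * u)"
    using g by (intro integrable_normal_moment_nz_1) simp
  have mean: "(\<integral>u. ?g u * u \<partial>lborel) = 0"
    using g integral_normal_moment_nz_1[of "sqrt \<gamma>" 0] by simp
  have split: "(\<lambda>u. ?g u * (u * T (b + c * u))) = (\<lambda>u. u * ?g u * (T (b + c * u) - T b) + T b * (?g u * u))"
    by (auto simp: fun_eq_iff algebra_simps)
  show "integrable lborel (\<lambda>u. ?g u * (u * T (b + c * u)))"
    unfolding split using increment_int mean_int by (intro Bochner_Integration.integrable_add integrable_mult_right)
  show "(\<integral>u. ?g u * (u * T (b + c * u)) \<partial>lborel) = \<gamma> * c * (\<integral>w. ?g w * T' (b + c * w) \<partial>lborel)"
    unfolding split using increment_int mean_int increment mean by (subst Bochner_Integration.integral_add) auto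
qed

abbreviation gaussian :: "real \<Rightarrow> real measure" where
  "gaussian \<gamma> \<equiv> density lborel (normal_density 0 (sqrt \<gamma>))"

lemma stein_gaussian:
  fixes T T' :: "real \<Rightarrow> real"
  assumes g: "\<gamma> > 0" and T: "abs_cont_deriv T T'"
    and int: "integrable (gaussian \<gamma>) (\<lambda>w. T' (b + c * w))"
  shows "(\<integral>u. T (b + c * u) * u \<partial>gaussian \<gamma>) = \<gamma> * c * (\<integral>w. T' (b + c * w) \<partial>gaussian \<gamma>)"
proof -
  let ?g = "normal_density 0 (sqrt \<gamma>)"
  have [measurable]: "T' \<in> borel_measurable borel"
    using T by (rule abs_cont_deriv_measurable)
  have int_lborel: "integrable lborel (\<lambda>w. ?g w * T' (b + c * w))"
    using int by (subst (asm) integrable_density) auto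
  note stein = stein_lborel[OF g T int_lborel]
  have "(\<lambda>u. inverse (?g u) * (?g u * (u * T (b + c * u)))) \<in> borel_measurable lborel"
    using borel_measurable_integrable[OF stein(1)] by measurable
  moreover have "inverse (?g u) * (?g u * (u * T (b + c * u))) = T (b + c * u) * u" for u
    using normal_density_pos[of "sqrt \<gamma>" 0 u] g by (simp add: field_simps)
  ultimately have "(\<lambda>u. T (b + c * u) * u) \<in> borel_measurable lborel" by simp
  then show ?thesis
    using stein(2) by (subst integral_density, simp_all, subst integral_density) (auto simp: ac_simps)
qed

section \<open>Square-integrable complex random variables\<close>

definition square_integrable :: "'a measure \<Rightarrow> ('a \<Rightarrow> complex) \<Rightarrow> bool" where
  "square_integrable M Z \<longleftrightarrow> Z \<in> borel_measurable M \<and> integrable M (\<lambda>\<omega>. (cmod (Z \<omega>))\<^sup>2)"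

lemma square_integrable_norm2: "square_integrable M Z \<Longrightarrow> integrable M (\<lambda>\<omega>. (cmod (Z \<omega>))\<^sup>2)"
  by (simp add: square_integrable_def)

lemma square_integrable_of_real:
  "X \<in> borel_measurable M \<Longrightarrow> integrable M (\<lambda>\<omega>. (X \<omega>)\<^sup>2) \<Longrightarrow> square_integrable M (\<lambda>\<omega>. complex_of_real (X \<omega>))"
  unfolding square_integrable_def by auto

lemma square_integrable_mult_const:
  assumes "square_integrable M Z"
  shows "square_integrable M (\<lambda>\<omega>. Z \<omega> * c)"
proof -
  have [measurable]: "Z \<in> borel_measurable M" using assms by (simp add: square_integrable_def)
  have "integrable M (\<lambda>\<omega>. (cmod c)\<^sup>2 * (cmod (Z \<omega>))\<^sup>2)"
    using assms by (intro integrable_mult_right) (simp add: square_integrable_def)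
  then show ?thesis
    unfolding square_integrable_def by (simp add: norm_mult power_mult_distrib mult.commute)
qed

lemma square_integrable_const_mult:
  "square_integrable M Z \<Longrightarrow> square_integrable M (\<lambda>\<omega>. c * Z \<omega>)"
  using square_integrable_mult_const[of M Z c] by (simp add: mult.commute)

lemma square_integrable_divide:
  "square_integrable M Z \<Longrightarrow> square_integrable M (\<lambda>\<omega>. Z \<omega> / c)"
  using square_integrable_mult_const[of M Z "inverse c"] by (simp add: divide_inverse)

lemma square_integrable_add:
  assumes Z: "square_integrable M Z" and W: "square_integrable M W"
  shows "square_integrable M (\<lambda>\<omega>. Z \<omega> + W \<omega>)"
proof -
  have [measurable]: "Z \<in> borel_measurable M" "W \<in> borel_measurable M"
    using Z W by (simp_all add: square_integrable_def)
  have bound: "(cmod (a + b))\<^sup>2 \<le> 2 * (cmod a)\<^sup>2 + 2 * (cmod b)\<^sup>2" for a b :: complex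
  proof -
    have "(cmod (a + b))\<^sup>2 \<le> (cmod a + cmod b)\<^sup>2"
      by (intro power_mono norm_triangle_ineq) simp
    also have "\<dots> \<le> 2 * (cmod a)\<^sup>2 + 2 * (cmod b)\<^sup>2"
      using zero_le_power2[of "cmod a - cmod b"] unfolding power2_sum power2_diff by linarith
    finally show ?thesis .
  qed
  have "integrable M (\<lambda>\<omega>. (cmod (Z \<omega> + W \<omega>))\<^sup>2)"
    by (rule Bochner_Integration.integrable_bound[of _ "\<lambda>\<omega>. 2 * (cmod (Z \<omega>))\<^sup>2 + 2 * (cmod (W \<omega>))\<^sup>2"])
       (use Z W bound in \<open>auto simp: square_integrable_def\<close>)
  then show ?thesis by (simp add: square_integrable_def)
qed

lemma square_integrable_diff:
  "square_integrable M Z \<Longrightarrow> square_integrable M W \<Longrightarrow> square_integrable M (\<lambda>\<omega>. Z \<omega> - W \<omega>)"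
  using square_integrable_add[OF _ square_integrable_mult_const[of M W "-1"], of Z] by simp

lemma square_integrable_sum:
  "finite A \<Longrightarrow> (\<And>i. i \<in> A \<Longrightarrow> square_integrable M (Z i)) \<Longrightarrow> square_integrable M (\<lambda>\<omega>. \<Sum>i\<in>A. Z i \<omega>)"
proof (induction A rule: finite_induct)
  case empty
  then show ?case by (simp add: square_integrable_def)
qed (simp add: square_integrable_add)

lemma square_integrable_Re_mult_cnj:
  assumes Z: "square_integrable M Z" and W: "square_integrable M W"
  shows "integrable M (\<lambda>\<omega>. Re (Z \<omega> * cnj (W \<omega>)))"
proof (rule Bochner_Integration.integrable_bound[of _ "\<lambda>\<omega>. (cmod (Z \<omega>))\<^sup>2 + (cmod (W \<omega>))\<^sup>2"])
  have bound: "\<bar>Re (a * cnj b)\<bar> \<le> (cmod a)\<^sup>2 + (cmod b)\<^sup>2" for a b :: complex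
  proof -
    have "\<bar>Re (a * cnj b)\<bar> \<le> cmod a * cmod b"
      using abs_Re_le_cmod[of "a * cnj b"] by (simp add: norm_mult)
    also have "\<dots> \<le> (cmod a)\<^sup>2 + (cmod b)\<^sup>2"
      using zero_le_power2[of "cmod a - cmod b"] mult_nonneg_nonneg[OF norm_ge_zero norm_ge_zero, of a b]
      unfolding power2_diff by linarith
    finally show ?thesis .
  qed
  have [measurable]: "Z \<in> borel_measurable M" "W \<in> borel_measurable M"
    using Z W by (simp_all add: square_integrable_def)
  have [measurable]: "cnj \<in> borel_measurable borel"
    by (intro borel_measurable_continuous_onI continuous_intros)
  show "integrable M (\<lambda>\<omega>. (cmod (Z \<omega>))\<^sup>2 + (cmod (W \<omega>))\<^sup>2)"
    using Z W by (intro Bochner_Integration.integrable_add) (simp_all add: square_integrable_def)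
  show "(\<lambda>\<omega>. Re (Z \<omega> * cnj (W \<omega>))) \<in> borel_measurable M"
    by measurable
  show "AE \<omega> in M. norm (Re (Z \<omega> * cnj (W \<omega>))) \<le> norm ((cmod (Z \<omega>))\<^sup>2 + (cmod (W \<omega>))\<^sup>2)"
    using bound by simp
qed

lemma integrable_mult_square_integrable:
  fixes X Y :: "'a \<Rightarrow> real"
  assumes "X \<in> borel_measurable M" "integrable M (\<lambda>\<omega>. (X \<omega>)\<^sup>2)"
    and "Y \<in> borel_measurable M" "integrable M (\<lambda>\<omega>. (Y \<omega>)\<^sup>2)"
  shows "integrable M (\<lambda>\<omega>. X \<omega> * Y \<omega>)"
  using square_integrable_Re_mult_cnj[OF square_integrable_of_real[OF assms(1,2)]
                                        square_integrable_of_real[OF assms(3,4)]]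
  by simp

lemma (in prob_space) integrable_square_of_cube:
  fixes X :: "'a \<Rightarrow> real"
  assumes "X \<in> borel_measurable M" "integrable M (\<lambda>\<omega>. \<bar>X \<omega>\<bar> ^ 3)"
  shows "integrable M (\<lambda>\<omega>. (X \<omega>)\<^sup>2)"
proof (rule Bochner_Integration.integrable_bound[of _ "\<lambda>\<omega>. 1 + \<bar>X \<omega>\<bar> ^ 3"])
  have bound: "x\<^sup>2 \<le> 1 + \<bar>x\<bar> ^ 3" for x :: real
  proof (cases "\<bar>x\<bar> \<le> 1")
    case True
    moreover have "0 \<le> \<bar>x\<bar> ^ 3" by simp
    ultimately show ?thesis using abs_square_le_1[of x] by linarith
  next
    case False
    then have "\<bar>x\<bar>\<^sup>2 * 1 \<le> \<bar>x\<bar>\<^sup>2 * \<bar>x\<bar>" by (intro mult_left_mono) auto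
    then show ?thesis by (simp add: power2_eq_square power3_eq_cube)
  qed
  show "integrable M (\<lambda>\<omega>. 1 + \<bar>X \<omega>\<bar> ^ 3)"
    using assms by (intro Bochner_Integration.integrable_add) auto
  show "AE \<omega> in M. norm ((X \<omega>)\<^sup>2) \<le> norm (1 + \<bar>X \<omega>\<bar> ^ 3)"
    using bound by (simp add: abs_of_nonneg)
qed (use assms in simp)

lemma expected_energy_spectral:
  assumes Ds: "\<forall>i<d. Ds i > 0"
    and int: "\<And>p. p \<in> grid d Ds \<Longrightarrow> integrable M (\<lambda>\<omega>. (cmod (dft d Ds (f \<omega>) p))\<^sup>2)"
  shows "(\<integral>\<omega>. energy d Ds (f \<omega>) \<partial>M)
       = (\<Sum>p\<in>grid d Ds. \<integral>\<omega>. (cmod (dft d Ds (f \<omega>) p))\<^sup>2 \<partial>M) / real (gridsize d Ds) / real (gridsize d Ds)"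
proof -
  have "energy d Ds (f \<omega>) = (\<Sum>p\<in>grid d Ds. (cmod (dft d Ds (f \<omega>) p))\<^sup>2) / real (gridsize d Ds) / real (gridsize d Ds)" for \<omega>
    unfolding energy_def parseval[OF Ds, of "f \<omega>"] ..
  then have "(\<integral>\<omega>. energy d Ds (f \<omega>) \<partial>M) = (\<integral>\<omega>. (\<Sum>p\<in>grid d Ds. (cmod (dft d Ds (f \<omega>) p))\<^sup>2) \<partial>M) / real (gridsize d Ds) / real (gridsize d Ds)"
    by simp
  also have "(\<integral>\<omega>. (\<Sum>p\<in>grid d Ds. (cmod (dft d Ds (f \<omega>) p))\<^sup>2) \<partial>M) = (\<Sum>p\<in>grid d Ds. \<integral>\<omega>. (cmod (dft d Ds (f \<omega>) p))\<^sup>2 \<partial>M)"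
    by (rule Bochner_Integration.integral_sum) (rule int)
  finally show ?thesis .
qed

section \<open>Stein's lemma for a linear form in independent Gaussians\<close>

lemma (in product_sigma_finite) AE_integrable_insert:
  fixes f :: "_ \<Rightarrow> real"
  assumes I: "finite I" "i \<notin> I" and f: "integrable (Pi\<^sub>M (insert i I) M) f"
  shows "AE x in Pi\<^sub>M I M. integrable (M i) (\<lambda>y. f (x(i:=y)))"
proof -
  interpret I: finite_product_sigma_finite M I by standard fact
  interpret J: finite_product_sigma_finite M "{i}" by standard simp
  interpret P: pair_sigma_finite "Pi\<^sub>M I M" "Pi\<^sub>M {i} M" ..
  have f_borel: "f \<in> borel_measurable (Pi\<^sub>M (insert i I) M)" using f by auto
  have "distr (Pi\<^sub>M I M \<Otimes>\<^sub>M Pi\<^sub>M {i} M) (Pi\<^sub>M (I \<union> {i}) M) (merge I {i}) = Pi\<^sub>M (I \<union> {i}) M"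
    using I by (intro distr_merge) auto
  then have "integrable (Pi\<^sub>M I M \<Otimes>\<^sub>M Pi\<^sub>M {i} M) (\<lambda>x. f (merge I {i} x))"
    using f by (intro integrable_distr[OF measurable_merge]) simp
  from P.AE_integrable_fst'[OF this]
  have "AE x in Pi\<^sub>M I M. integrable (Pi\<^sub>M {i} M) (\<lambda>y. f (merge I {i} (x, y)))"
    by simp
  with AE_space show ?thesis
  proof eventually_elim
    fix x assume x: "x \<in> space (Pi\<^sub>M I M)" and int: "integrable (Pi\<^sub>M {i} M) (\<lambda>y. f (merge I {i} (x, y)))"
    have m: "(\<lambda>y. f (x(i := y))) \<in> borel_measurable (M i)"
      using measurable_comp[OF measurable_component_update f_borel, OF x \<open>i \<notin> I\<close>]
      unfolding comp_def .
    have "integrable (Pi\<^sub>M {i} M) (\<lambda>y. f (x(i := y i))) \<longleftrightarrow>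
          integrable (Pi\<^sub>M {i} M) (\<lambda>y. f (merge I {i} (x, y)))"
      using x I by (intro Bochner_Integration.integrable_cong refl)
                   (auto intro!: arg_cong[where f=f] simp: merge_def space_PiM extensional_def PiE_def fun_eq_iff)
    with int have "integrable (Pi\<^sub>M {i} M) (\<lambda>y. f (x(i := y i)))" by simp
    then have "integrable (distr (Pi\<^sub>M {i} M) (M i) (\<lambda>x. x i)) (\<lambda>y. f (x(i:=y)))"
      by (subst integrable_distr_eq) (auto simp: m)
    then show "integrable (M i) (\<lambda>y. f (x(i:=y)))" by (simp add: distr_singleton)
  qed
qed

text \<open>Proof: integrate out the coordinate x first and apply the one-dimensional Stein lemma.\<close>
lemma stein_gaussian_affine_form:
  fixes T T' :: "real \<Rightarrow> real" and w :: "'i \<Rightarrow> real"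
  assumes g: "\<gamma> > 0" and T: "abs_cont_deriv T T'" and T_meas: "T \<in> borel_measurable borel"
    and J: "finite J" "x \<in> J"
    and int: "integrable (Pi\<^sub>M J (\<lambda>_. gaussian \<gamma>)) (\<lambda>\<nu>. T (a + (\<Sum>y\<in>J. \<nu> y * w y)) * \<nu> x)"
    and int': "integrable (Pi\<^sub>M J (\<lambda>_. gaussian \<gamma>)) (\<lambda>\<nu>. T' (a + (\<Sum>y\<in>J. \<nu> y * w y)))"
  shows "(\<integral>\<nu>. T (a + (\<Sum>y\<in>J. \<nu> y * w y)) * \<nu> x \<partial>Pi\<^sub>M J (\<lambda>_. gaussian \<gamma>))
       = \<gamma> * w x * (\<integral>\<nu>. T' (a + (\<Sum>y\<in>J. \<nu> y * w y)) \<partial>Pi\<^sub>M J (\<lambda>_. gaussian \<gamma>))"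
proof -
  have N_prob: "prob_space (gaussian \<gamma>)" using g by (intro prob_space_normal_density) simp
  interpret N: sigma_finite_measure "gaussian \<gamma>" using prob_space_imp_sigma_finite[OF N_prob] .
  interpret product_sigma_finite "\<lambda>_. gaussian \<gamma>"
    unfolding product_sigma_finite_def using N.sigma_finite_measure_axioms by simp
  define I where "I = J - {x}"
  have JI: "J = insert x I" "x \<notin> I" "finite I" using J by (auto simp: I_def)
  interpret I: finite_product_sigma_finite "\<lambda>_. gaussian \<gamma>" I by standard (rule JI(3))
  note T_meas [measurable]
  have [measurable]: "T' \<in> borel_measurable borel"
    using T by (rule abs_cont_deriv_measurable)
  have coord [measurable]: "(\<lambda>\<nu>. \<nu> y) \<in> borel_measurable (Pi\<^sub>M I (\<lambda>_. gaussian \<gamma>))" if "y \<in> I" for y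
    using measurable_component_singleton[of y I "\<lambda>_. gaussian \<gamma>"] that by (simp add: measurable_lborel2[symmetric])
  define b where "b \<nu> = a + (\<Sum>y\<in>I. \<nu> y * w y)" for \<nu>
  have [measurable]: "b \<in> borel_measurable (Pi\<^sub>M I (\<lambda>_. gaussian \<gamma>))"
    unfolding b_def by measurable
  have [measurable]: "snd \<in> borel_measurable (Pi\<^sub>M I (\<lambda>_. gaussian \<gamma>) \<Otimes>\<^sub>M gaussian \<gamma>)"
    using measurable_snd[of "Pi\<^sub>M I (\<lambda>_. gaussian \<gamma>)" "gaussian \<gamma>"]
    by (simp add: measurable_lborel2[symmetric])
  have slice: "a + (\<Sum>y\<in>insert x I. (\<nu>(x := z)) y * w y) = b \<nu> + w x * z" for \<nu> z
  proof -
    have "(\<Sum>y\<in>I. (\<nu>(x := z)) y * w y) = (\<Sum>y\<in>I. \<nu> y * w y)"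
      using JI(2) by (intro sum.cong refl) auto
    then show ?thesis unfolding b_def using JI(2,3) by (simp add: algebra_simps)
  qed
  have E1: "(\<integral>\<nu>. T (a + (\<Sum>y\<in>J. \<nu> y * w y)) * \<nu> x \<partial>Pi\<^sub>M J (\<lambda>_. gaussian \<gamma>))
      = (\<integral>\<nu>. (\<integral>z. T (b \<nu> + w x * z) * z \<partial>gaussian \<gamma>) \<partial>Pi\<^sub>M I (\<lambda>_. gaussian \<gamma>))"
    using product_integral_insert[OF JI(3,2) int[unfolded JI(1)]] by (simp only: slice fun_upd_same JI(1))
  have E2: "(\<integral>\<nu>. T' (a + (\<Sum>y\<in>J. \<nu> y * w y)) \<partial>Pi\<^sub>M J (\<lambda>_. gaussian \<gamma>))
      = (\<integral>\<nu>. (\<integral>z. T' (b \<nu> + w x * z) \<partial>gaussian \<gamma>) \<partial>Pi\<^sub>M I (\<lambda>_. gaussian \<gamma>))"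
    using product_integral_insert[OF JI(3,2) int'[unfolded JI(1)]] by (simp only: slice fun_upd_same JI(1))
  have "AE \<nu> in Pi\<^sub>M I (\<lambda>_. gaussian \<gamma>). integrable (gaussian \<gamma>) (\<lambda>z. T' (b \<nu> + w x * z))"
    using AE_integrable_insert[OF JI(3,2) int'[unfolded JI(1)]] by (simp only: slice)
  then have "AE \<nu> in Pi\<^sub>M I (\<lambda>_. gaussian \<gamma>). (\<integral>z. T (b \<nu> + w x * z) * z \<partial>gaussian \<gamma>) = \<gamma> * w x * (\<integral>z. T' (b \<nu> + w x * z) \<partial>gaussian \<gamma>)"
    by eventually_elim (rule stein_gaussian[OF g T])
  then have "(\<integral>\<nu>. (\<integral>z. T (b \<nu> + w x * z) * z \<partial>gaussian \<gamma>) \<partial>Pi\<^sub>M I (\<lambda>_. gaussian \<gamma>))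
      = (\<integral>\<nu>. \<gamma> * w x * (\<integral>z. T' (b \<nu> + w x * z) \<partial>gaussian \<gamma>) \<partial>Pi\<^sub>M I (\<lambda>_. gaussian \<gamma>))"
    by (rule integral_cong_AE[rotated 2]) measurable
  then show ?thesis unfolding E1 E2 by simp
qed

lemma Re_of_real_mult: "Re (complex_of_real r * v) = r * Re v"
  by simp

lemma Re_mult_cnj_lincomb:
  fixes a b :: "_ \<Rightarrow> real" and u w :: "_ \<Rightarrow> complex"
  assumes "finite A" "finite B"
  shows "Re ((\<Sum>i\<in>A. complex_of_real (a i) * u i) * cnj ((\<Sum>j\<in>B. complex_of_real (b j) * w j) / z))
       = (\<Sum>i\<in>A. \<Sum>j\<in>B. a i * b j * Re (u i * cnj (w j / z)))"
proof -
  have "(\<Sum>i\<in>A. complex_of_real (a i) * u i) * cnj ((\<Sum>j\<in>B. complex_of_real (b j) * w j) / z)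
      = (\<Sum>i\<in>A. \<Sum>j\<in>B. complex_of_real (a i * b j) * (u i * cnj (w j / z)))"
  proof -
    have "cnj ((\<Sum>j\<in>B. complex_of_real (b j) * w j) / z) = (\<Sum>j\<in>B. complex_of_real (b j) * cnj (w j / z))"
      by (simp add: sum_divide_distrib cnj_sum)
    then show ?thesis by (simp add: sum_product algebra_simps)
  qed
  then show ?thesis by (simp only: Re_sum Re_of_real_mult)
qed

lemma cmod_power2_deconvolution_split:
  fixes a \<sigma> \<nu> H :: complex
  assumes "H \<noteq> 0"
  shows "(cmod (a - \<sigma>))\<^sup>2 = (cmod (a - (H * \<sigma> + \<nu>) / H))\<^sup>2 + 2 * Re (a * cnj (\<nu> / H))
           - 2 * Re (\<sigma> * cnj (\<nu> / H)) - (cmod \<nu>)\<^sup>2 / (cmod H)\<^sup>2"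
proof -
  have split: "(cmod (x + y))\<^sup>2 = (cmod x)\<^sup>2 + 2 * Re (x * cnj y) + (cmod y)\<^sup>2" for x y :: complex
    unfolding cmod_power2 by (simp add: power2_eq_square algebra_simps)
  have "a - \<sigma> = (a - (H * \<sigma> + \<nu>) / H) + \<nu> / H"
    using assms by (simp add: field_simps)
  then have "(cmod (a - \<sigma>))\<^sup>2 = (cmod (a - (H * \<sigma> + \<nu>) / H))\<^sup>2
      + 2 * Re ((a - (H * \<sigma> + \<nu>) / H) * cnj (\<nu> / H)) + (cmod (\<nu> / H))\<^sup>2"
    by (simp only: split)
  moreover have "(a - (H * \<sigma> + \<nu>) / H) * cnj (\<nu> / H) = a * cnj (\<nu> / H) - \<sigma> * cnj (\<nu> / H) - (\<nu> / H) * cnj (\<nu> / H)"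
    using assms by (simp add: field_simps)
  moreover have "Re ((\<nu> / H) * cnj (\<nu> / H)) = (cmod \<nu>)\<^sup>2 / (cmod H)\<^sup>2"
    by (simp add: cmod_power2 power2_eq_square norm_divide power_divide flip: complex_norm_square)
  ultimately show ?thesis by (simp add: norm_divide power_divide)
qed

text \<open>|z|^2 in the shape of the bilinear expansion above, with denominator 1.\<close>
lemma cmod_power2_Re: "(cmod z)\<^sup>2 = Re (z * cnj (z / 1))"
  unfolding cmod_power2 by (simp add: power2_eq_square)

section \<open>The observation model\<close>

locale observation_model = prob_space M for M :: "'a measure" +
  fixes d :: nat and Ds :: "nat \<Rightarrow> nat" and \<gamma> :: real and L :: nat
    and s n r :: "'a \<Rightarrow> (nat \<Rightarrow> nat) \<Rightarrow> real" and h :: "(nat \<Rightarrow> nat) \<Rightarrow> real"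
    and \<phi> \<phi>t :: "nat \<Rightarrow> (nat \<Rightarrow> nat) \<Rightarrow> real"
    and \<Theta> \<Theta>' :: "nat \<Rightarrow> real \<Rightarrow> real"
    and rl :: "nat \<Rightarrow> 'a \<Rightarrow> real"
  assumes Ds_pos: "\<forall>i<d. Ds i > 0"
    and gamma_pos: "\<gamma> > 0"
    and s_meas: "\<forall>x\<in>grid d Ds. (\<lambda>\<omega>. s \<omega> x) \<in> borel_measurable M"
    and s_var: "\<forall>x\<in>grid d Ds. integrable M (\<lambda>\<omega>. (s \<omega> x)\<^sup>2)"
    and n_normal: "\<forall>x\<in>grid d Ds. distributed M lborel (\<lambda>\<omega>. n \<omega> x) (normal_density 0 (sqrt \<gamma>))"
    and n_indep: "indep_vars (\<lambda>_. borel) (\<lambda>x \<omega>. n \<omega> x) (grid d Ds)"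
    and sn_indep: "indep_var
         (Pi\<^sub>M (grid d Ds) (\<lambda>_. borel)) (\<lambda>\<omega>. restrict (s \<omega>) (grid d Ds))
         (Pi\<^sub>M (grid d Ds) (\<lambda>_. borel)) (\<lambda>\<omega>. restrict (n \<omega>) (grid d Ds))"
    and r_def: "r = (\<lambda>\<omega> x. circ_conv d Ds h (s \<omega>) x + n \<omega> x)"
    and rl_def: "rl = (\<lambda>l \<omega>. ip d Ds (r \<omega>) (\<phi> l))"
    and Theta_cont: "\<forall>l\<in>{1..L}. continuous_on UNIV (\<Theta> l)"
    and Theta_deriv: "\<forall>l\<in>{1..L}. abs_cont_deriv (\<Theta> l) (\<Theta>' l)"
    and Theta_mom: "\<forall>l\<in>{1..L}. integrable M (\<lambda>\<omega>. \<bar>\<Theta> l (rl l \<omega>)\<bar> ^ 3)"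
    and Theta'_mom: "\<forall>l\<in>{1..L}. integrable M (\<lambda>\<omega>. \<bar>\<Theta>' l (rl l \<omega>)\<bar> ^ 3)"
begin

abbreviation G :: "(nat \<Rightarrow> nat) set" where
  "G \<equiv> grid d Ds"

lemma n_meas [measurable]: "x \<in> G \<Longrightarrow> (\<lambda>\<omega>. n \<omega> x) \<in> borel_measurable M"
  using n_normal by (auto simp: distributed_def)

lemma s_meas_at [measurable]: "x \<in> G \<Longrightarrow> (\<lambda>\<omega>. s \<omega> x) \<in> borel_measurable M"
  using s_meas by auto

lemma n_integrable: "x \<in> G \<Longrightarrow> integrable M (\<lambda>\<omega>. n \<omega> x)"
  using distributed_integrable[OF bspec[OF n_normal], of x "\<lambda>x. x"]
    integrable_normal_moment_nz_1[of "sqrt \<gamma>" 0] gamma_pos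
  by simp

lemma n_mean: "x \<in> G \<Longrightarrow> (\<integral>\<omega>. n \<omega> x \<partial>M) = 0"
  using normal_distributed_expectation[OF _ bspec[OF n_normal]] gamma_pos by simp

lemma n_square_integrable: "x \<in> G \<Longrightarrow> integrable M (\<lambda>\<omega>. (n \<omega> x)\<^sup>2)"
  using distributed_integrable[OF bspec[OF n_normal], of x "\<lambda>x. x\<^sup>2"]
    integrable_normal_moment[of "sqrt \<gamma>" 0 2] gamma_pos
  by simp

lemma n_covariance:
  assumes x: "x \<in> G" and y: "y \<in> G"
  shows "(\<integral>\<omega>. n \<omega> x * n \<omega> y \<partial>M) = (if x = y then \<gamma> else 0)"
proof (cases "x = y")
  case True
  then show ?thesis
    using distributed_integral[OF bspec[OF n_normal], of x "\<lambda>x. x\<^sup>2"] x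
      integral_normal_moment_even[of "sqrt \<gamma>" 0 1] gamma_pos
    by (simp add: power2_eq_square)
next
  case False
  have "indep_vars (\<lambda>_. borel) (\<lambda>x \<omega>. n \<omega> x) {x, y}"
    using x y by (intro indep_vars_subset[OF n_indep]) auto
  from indep_vars_lebesgue_integral[OF _ this]
  have "(\<integral>\<omega>. (\<Prod>i\<in>{x,y}. n \<omega> i) \<partial>M) = (\<Prod>i\<in>{x,y}. \<integral>\<omega>. n \<omega> i \<partial>M)"
    using x y n_integrable by auto
  then show ?thesis using False x y by (simp add: n_mean)
qed

lemma signal_noise_uncorrelated:
  assumes x: "x \<in> G" and y: "y \<in> G"
  shows "(\<integral>\<omega>. s \<omega> y * n \<omega> x \<partial>M) = 0"
proof -
  have "indep_var borel ((\<lambda>f. f y) \<circ> (\<lambda>\<omega>. restrict (s \<omega>) G)) borel ((\<lambda>f. f x) \<circ> (\<lambda>\<omega>. restrict (n \<omega>) G))"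
    using x y by (intro indep_var_compose[OF sn_indep] measurable_component_singleton)
  then have "indep_var borel (\<lambda>\<omega>. s \<omega> y) borel (\<lambda>\<omega>. n \<omega> x)"
    using x y by (simp add: comp_def)
  moreover have "integrable M (\<lambda>\<omega>. s \<omega> y)"
    using y s_var by (intro square_integrable_imp_integrable[OF s_meas_at[OF y]]) blast
  ultimately have "(\<integral>\<omega>. s \<omega> y * n \<omega> x \<partial>M) = (\<integral>\<omega>. s \<omega> y \<partial>M) * (\<integral>\<omega>. n \<omega> x \<partial>M)"
    using x n_integrable by (intro indep_var_lebesgue_integral) blast+
  then show ?thesis using x by (simp add: n_mean)
qed

definition signal :: "'a \<Rightarrow> (nat \<Rightarrow> nat) \<Rightarrow> real" where
  "signal \<omega> = restrict (s \<omega>) G"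

definition noise :: "'a \<Rightarrow> (nat \<Rightarrow> nat) \<Rightarrow> real" where
  "noise \<omega> = restrict (n \<omega>) G"

lemma signal_meas [measurable]: "signal \<in> measurable M (Pi\<^sub>M G (\<lambda>_. borel))"
  unfolding signal_def by (intro measurable_restrict) simp

lemma noise_meas [measurable]: "noise \<in> measurable M (Pi\<^sub>M G (\<lambda>_. borel))"
  unfolding noise_def by (intro measurable_restrict) simp

lemma distr_noise: "distr M (Pi\<^sub>M G (\<lambda>_. borel)) noise = Pi\<^sub>M G (\<lambda>_. gaussian \<gamma>)"
proof -
  have "G \<noteq> {}" using Ds_pos by (auto simp: grid_def intro!: exI[of _ "\<lambda>_. 0"])
  then have "distr M (Pi\<^sub>M G (\<lambda>_. borel)) (\<lambda>\<omega>. \<lambda>i\<in>G. n \<omega> i) = Pi\<^sub>M G (\<lambda>i. distr M borel (\<lambda>\<omega>. n \<omega> i))"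
    using indep_vars_iff_distr_eq_PiM'[where X="\<lambda>x \<omega>. n \<omega> x"] n_indep by simp
  also have "\<dots> = Pi\<^sub>M G (\<lambda>_. gaussian \<gamma>)"
  proof (rule PiM_cong[OF refl])
    fix x assume x: "x \<in> G"
    have "distr M borel (\<lambda>\<omega>. n \<omega> x) = distr M lborel (\<lambda>\<omega>. n \<omega> x)" by (rule distr_cong) auto
    also have "\<dots> = gaussian \<gamma>" using n_normal x unfolding distributed_def by blast
    finally show "distr M borel (\<lambda>\<omega>. n \<omega> x) = gaussian \<gamma>" .
  qed
  finally show ?thesis by (simp add: noise_def[abs_def])
qed

definition signal_law :: "((nat \<Rightarrow> nat) \<Rightarrow> real) measure" where
  "signal_law = distr M (Pi\<^sub>M G (\<lambda>_. borel)) signal"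

lemma distr_signal_noise:
  "distr M (Pi\<^sub>M G (\<lambda>_. borel) \<Otimes>\<^sub>M Pi\<^sub>M G (\<lambda>_. borel)) (\<lambda>\<omega>. (signal \<omega>, noise \<omega>))
   = signal_law \<Otimes>\<^sub>M Pi\<^sub>M G (\<lambda>_. gaussian \<gamma>)"
  using sn_indep[unfolded indep_var_distribution_eq, folded signal_def[abs_def] noise_def[abs_def]] distr_noise
  by (simp add: signal_law_def signal_def noise_def)

definition coeff :: "nat \<Rightarrow> ((nat \<Rightarrow> nat) \<Rightarrow> real) \<Rightarrow> ((nat \<Rightarrow> nat) \<Rightarrow> real) \<Rightarrow> real" where
  "coeff l \<sigma> \<nu> = (\<Sum>y\<in>G. circ_conv d Ds h \<sigma> y * \<phi> l y) + (\<Sum>y\<in>G. \<nu> y * \<phi> l y)"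

lemma rl_eq: "rl l \<omega> = coeff l (signal \<omega>) (noise \<omega>)"
  unfolding rl_def r_def ip_def coeff_def signal_def noise_def circ_conv_def
  by (simp add: sum.distrib distrib_right)

lemma coeff_meas [measurable]:
  "(\<lambda>p. coeff l (fst p) (snd p)) \<in> borel_measurable (Pi\<^sub>M G (\<lambda>_. borel) \<Otimes>\<^sub>M Pi\<^sub>M G (\<lambda>_. borel))"
  unfolding coeff_def circ_conv_def by measurable

lemma rl_meas [measurable]: "rl l \<in> borel_measurable M"
proof -
  have "(\<lambda>\<omega>. (signal \<omega>, noise \<omega>)) \<in> measurable M (Pi\<^sub>M G (\<lambda>_. borel) \<Otimes>\<^sub>M Pi\<^sub>M G (\<lambda>_. borel))"
    by measurable
  from measurable_compose[OF this coeff_meas] show ?thesis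
    unfolding rl_eq[abs_def] by simp
qed

lemma Theta_meas [measurable]: "l \<in> {1..L} \<Longrightarrow> \<Theta> l \<in> borel_measurable borel"
  using Theta_cont by (intro borel_measurable_continuous_onI) auto

lemma Theta'_meas [measurable]: "l \<in> {1..L} \<Longrightarrow> \<Theta>' l \<in> borel_measurable borel"
  using Theta_deriv by (intro abs_cont_deriv_measurable) auto

lemma Theta_moments:
  assumes l: "l \<in> {1..L}"
  shows "integrable M (\<lambda>\<omega>. (\<Theta> l (rl l \<omega>))\<^sup>2)" "integrable M (\<lambda>\<omega>. \<Theta>' l (rl l \<omega>))"
proof -
  have [measurable]: "\<Theta> l \<in> borel_measurable borel" "\<Theta>' l \<in> borel_measurable borel"
    using l by (simp_all add: Theta_meas Theta'_meas)
  have m: "(\<lambda>\<omega>. \<Theta> l (rl l \<omega>)) \<in> borel_measurable M" "(\<lambda>\<omega>. \<Theta>' l (rl l \<omega>)) \<in> borel_measurable M"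
    by measurable
  show "integrable M (\<lambda>\<omega>. (\<Theta> l (rl l \<omega>))\<^sup>2)"
    using l Theta_mom by (intro integrable_square_of_cube[OF m(1)]) blast
  have "integrable M (\<lambda>\<omega>. (\<Theta>' l (rl l \<omega>))\<^sup>2)"
    using l Theta'_mom by (intro integrable_square_of_cube[OF m(2)]) blast
  then show "integrable M (\<lambda>\<omega>. \<Theta>' l (rl l \<omega>))"
    by (rule square_integrable_imp_integrable[OF m(2)])
qed

text \<open>Given the
  signal, r_l is an affine form in the Gaussian noise vector, so this is Stein's lemma
  integrated against the law of the signal.\<close>
lemma stein_noise:
  assumes l: "l \<in> {1..L}" and x: "x \<in> G"
  shows "(\<integral>\<omega>. \<Theta> l (rl l \<omega>) * n \<omega> x \<partial>M) = \<gamma> * \<phi> l x * (\<integral>\<omega>. \<Theta>' l (rl l \<omega>) \<partial>M)"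
proof -
  let ?PS = "Pi\<^sub>M G (\<lambda>_. borel) :: ((nat \<Rightarrow> nat) \<Rightarrow> real) measure"
  let ?PN = "Pi\<^sub>M G (\<lambda>_. gaussian \<gamma>)"
  define F where "F p = \<Theta> l (coeff l (fst p) (snd p)) * snd p x" for p
  define F' where "F' p = \<Theta>' l (coeff l (fst p) (snd p))" for p
  have [measurable]: "F \<in> borel_measurable (?PS \<Otimes>\<^sub>M ?PS)" "F' \<in> borel_measurable (?PS \<Otimes>\<^sub>M ?PS)"
    unfolding F_def F'_def using l x by measurable
  have joint [measurable]: "(\<lambda>\<omega>. (signal \<omega>, noise \<omega>)) \<in> measurable M (?PS \<Otimes>\<^sub>M ?PS)"
    by measurable
  have F_eq: "(\<lambda>\<omega>. \<Theta> l (rl l \<omega>) * n \<omega> x) = (\<lambda>\<omega>. F (signal \<omega>, noise \<omega>))"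
    using x by (auto simp: F_def rl_eq noise_def)
  have F'_eq: "(\<lambda>\<omega>. \<Theta>' l (rl l \<omega>)) = (\<lambda>\<omega>. F' (signal \<omega>, noise \<omega>))"
    by (auto simp: F'_def rl_eq)
  have [measurable]: "\<Theta> l \<in> borel_measurable borel" using l by (rule Theta_meas)
  have int_M: "integrable M (\<lambda>\<omega>. \<Theta> l (rl l \<omega>) * n \<omega> x)"
    using Theta_moments(1)[OF l] n_square_integrable[OF x] x
    by (intro integrable_mult_square_integrable) measurable
  have int_F: "integrable (signal_law \<Otimes>\<^sub>M ?PN) F"
    using int_M unfolding F_eq distr_signal_noise[symmetric] by (subst integrable_distr_eq) simp_all
  have int_F': "integrable (signal_law \<Otimes>\<^sub>M ?PN) F'"
    using Theta_moments(2)[OF l] unfolding F'_eq distr_signal_noise[symmetric]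
    by (subst integrable_distr_eq) simp_all
  have E_F: "(\<integral>\<omega>. \<Theta> l (rl l \<omega>) * n \<omega> x \<partial>M) = integral\<^sup>L (signal_law \<Otimes>\<^sub>M ?PN) F"
    unfolding F_eq distr_signal_noise[symmetric] by (simp add: integral_distr)
  have E_F': "(\<integral>\<omega>. \<Theta>' l (rl l \<omega>) \<partial>M) = integral\<^sup>L (signal_law \<Otimes>\<^sub>M ?PN) F'"
    unfolding F'_eq distr_signal_noise[symmetric] by (simp add: integral_distr)
  interpret SL: prob_space signal_law
    unfolding signal_law_def by (rule prob_space_distr) simp
  interpret PN: prob_space ?PN
    using gamma_pos by (intro prob_space_PiM prob_space_normal_density) simp
  interpret J: pair_sigma_finite signal_law ?PN ..
  have "AE \<sigma> in signal_law. (\<integral>\<nu>. F (\<sigma>, \<nu>) \<partial>?PN) = \<gamma> * \<phi> l x * (\<integral>\<nu>. F' (\<sigma>, \<nu>) \<partial>?PN)"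
    using J.AE_integrable_fst'[OF int_F] J.AE_integrable_fst'[OF int_F']
  proof eventually_elim
    case (elim \<sigma>)
    then show ?case
      unfolding F_def F'_def coeff_def fst_conv snd_conv
      using stein_gaussian_affine_form[OF gamma_pos bspec[OF Theta_deriv l] Theta_meas[OF l] finite_grid x]
      by blast
  qed
  then have "(\<integral>\<sigma>. (\<integral>\<nu>. F (\<sigma>, \<nu>) \<partial>?PN) \<partial>signal_law) = (\<integral>\<sigma>. \<gamma> * \<phi> l x * (\<integral>\<nu>. F' (\<sigma>, \<nu>) \<partial>?PN) \<partial>signal_law)"
    using J.integrable_fst'[OF int_F] J.integrable_fst'[OF int_F']
    by (intro integral_cong_AE) auto
  then show ?thesis
    unfolding E_F E_F' J.integral_fst'[OF int_F, symmetric] J.integral_fst'[OF int_F', symmetric] by simp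
qed

abbreviation S_est :: "'a \<Rightarrow> (nat \<Rightarrow> nat) \<Rightarrow> complex" where
  "S_est \<omega> p \<equiv> \<Sum>l=1..L. complex_of_real (\<Theta> l (rl l \<omega>)) * dft d Ds (\<phi>t l) p"

lemma dft_r: "dft d Ds (r \<omega>) p = dft d Ds h p * dft d Ds (s \<omega>) p + dft d Ds (n \<omega>) p"
  unfolding r_def by (simp add: dft_add dft_circ_conv[OF Ds_pos])

lemma square_integrable_dft_real:
  assumes "\<And>x. x \<in> G \<Longrightarrow> (\<lambda>\<omega>. X \<omega> x) \<in> borel_measurable M"
    and "\<And>x. x \<in> G \<Longrightarrow> integrable M (\<lambda>\<omega>. (X \<omega> x)\<^sup>2)"
  shows "square_integrable M (\<lambda>\<omega>. dft d Ds (X \<omega>) p)"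
  unfolding dft_def using assms
  by (intro square_integrable_sum square_integrable_mult_const square_integrable_of_real) auto

lemma square_integrable_S: "square_integrable M (\<lambda>\<omega>. dft d Ds (s \<omega>) p)"
  using s_var by (intro square_integrable_dft_real) auto

lemma square_integrable_N: "square_integrable M (\<lambda>\<omega>. dft d Ds (n \<omega>) p)"
  using n_square_integrable by (intro square_integrable_dft_real) auto

lemma square_integrable_S_est: "square_integrable M (\<lambda>\<omega>. S_est \<omega> p)"
proof (intro square_integrable_sum square_integrable_mult_const square_integrable_of_real)
  fix l assume l: "l \<in> {1..L}"
  have [measurable]: "\<Theta> l \<in> borel_measurable borel" using l by (rule Theta_meas)
  show "(\<lambda>\<omega>. \<Theta> l (rl l \<omega>)) \<in> borel_measurable M" by measurable
  show "integrable M (\<lambda>\<omega>. (\<Theta> l (rl l \<omega>))\<^sup>2)" using l by (rule Theta_moments)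
qed simp

lemma noise_spectrum_power: "(\<integral>\<omega>. (cmod (dft d Ds (n \<omega>) p))\<^sup>2 \<partial>M) = \<gamma> * real (gridsize d Ds)"
proof -
  let ?e = "\<lambda>x. cis (-2*pi*phase d Ds x p)"
  have "(\<integral>\<omega>. (cmod (dft d Ds (n \<omega>) p))\<^sup>2 \<partial>M)
      = (\<integral>\<omega>. (\<Sum>x\<in>G. \<Sum>y\<in>G. n \<omega> x * n \<omega> y * Re (?e x * cnj (?e y / 1))) \<partial>M)"
    unfolding cmod_power2_Re dft_def by (subst Re_mult_cnj_lincomb) auto
  also have "\<dots> = (\<Sum>x\<in>G. \<Sum>y\<in>G. (\<integral>\<omega>. n \<omega> x * n \<omega> y \<partial>M) * Re (?e x * cnj (?e y / 1)))"
    by (simp add: integrable_mult_square_integrable n_square_integrable integrable_sum)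
  also have "\<dots> = (\<Sum>x\<in>G. \<Sum>y\<in>G. if x = y then \<gamma> * Re (?e x * cnj (?e y / 1)) else 0)"
    by (intro sum.cong refl) (simp add: n_covariance)
  also have "\<dots> = (\<Sum>x\<in>G. \<gamma>)"
    by (simp add: cis_cnj cis_mult)
  finally show ?thesis by (simp add: card_grid)
qed

lemma signal_noise_spectrum:
  "(\<integral>\<omega>. Re (dft d Ds (s \<omega>) p * cnj (dft d Ds (n \<omega>) p / z)) \<partial>M) = 0"
proof -
  let ?e = "\<lambda>x. cis (-2*pi*phase d Ds x p)"
  have "(\<integral>\<omega>. Re (dft d Ds (s \<omega>) p * cnj (dft d Ds (n \<omega>) p / z)) \<partial>M)
      = (\<integral>\<omega>. (\<Sum>y\<in>G. \<Sum>x\<in>G. s \<omega> y * n \<omega> x * Re (?e y * cnj (?e x / z))) \<partial>M)"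
    unfolding dft_def by (subst Re_mult_cnj_lincomb) auto
  also have "\<dots> = (\<Sum>y\<in>G. \<Sum>x\<in>G. (\<integral>\<omega>. s \<omega> y * n \<omega> x \<partial>M) * Re (?e y * cnj (?e x / z)))"
    using s_var by (simp add: integrable_mult_square_integrable n_square_integrable integrable_sum)
  also have "\<dots> = 0" by (simp add: signal_noise_uncorrelated)
  finally show ?thesis .
qed

lemma estimate_noise_spectrum:
  "(\<integral>\<omega>. Re (S_est \<omega> p * cnj (dft d Ds (n \<omega>) p / z)) \<partial>M)
   = \<gamma> * (\<Sum>l=1..L. (\<integral>\<omega>. \<Theta>' l (rl l \<omega>) \<partial>M) * Re (dft d Ds (\<phi> l) p * cnj (dft d Ds (\<phi>t l) p) / z))"
proof -
  let ?e = "\<lambda>x. cis (-2*pi*phase d Ds x p)"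
  let ?c = "\<lambda>l x. Re (dft d Ds (\<phi>t l) p * cnj (?e x / z))"
  have [measurable]: "l \<in> {1..L} \<Longrightarrow> (\<lambda>\<omega>. \<Theta> l (rl l \<omega>)) \<in> borel_measurable M" for l
    using Theta_meas by measurable
  have "(\<integral>\<omega>. Re (S_est \<omega> p * cnj (dft d Ds (n \<omega>) p / z)) \<partial>M)
      = (\<integral>\<omega>. (\<Sum>l\<in>{1..L}. \<Sum>x\<in>G. \<Theta> l (rl l \<omega>) * n \<omega> x * ?c l x) \<partial>M)"
    unfolding dft_def[of _ _ "n _"] by (subst Re_mult_cnj_lincomb) auto
  also have "\<dots> = (\<Sum>l\<in>{1..L}. \<Sum>x\<in>G. (\<integral>\<omega>. \<Theta> l (rl l \<omega>) * n \<omega> x \<partial>M) * ?c l x)"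
    by (simp add: integrable_mult_square_integrable n_square_integrable Theta_moments integrable_sum)
  also have "\<dots> = (\<Sum>l\<in>{1..L}. \<Sum>x\<in>G. \<gamma> * \<phi> l x * (\<integral>\<omega>. \<Theta>' l (rl l \<omega>) \<partial>M) * ?c l x)"
    by (intro sum.cong refl) (simp add: stein_noise)
  also have "\<dots> = (\<Sum>l\<in>{1..L}. \<gamma> * (\<integral>\<omega>. \<Theta>' l (rl l \<omega>) \<partial>M) * (\<Sum>x\<in>G. \<phi> l x * ?c l x))"
    by (simp add: sum_distrib_left ac_simps)
  also have "\<dots> = (\<Sum>l\<in>{1..L}. \<gamma> * (\<integral>\<omega>. \<Theta>' l (rl l \<omega>) \<partial>M) *
                     Re (dft d Ds (\<phi> l) p * cnj (dft d Ds (\<phi>t l) p) / z))"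
  proof (intro sum.cong refl arg_cong2[where f="(*)"])
    fix l
    have "dft d Ds (\<phi>t l) p * cnj (dft d Ds (\<phi> l) p / z)
        = (\<Sum>x\<in>G. complex_of_real (\<phi> l x) * (dft d Ds (\<phi>t l) p * cnj (?e x / z)))"
      unfolding dft_def[of _ _ "\<phi> l"] sum_divide_distrib cnj_sum sum_distrib_left
      by (intro sum.cong refl) (simp add: ac_simps)
    then have "Re (dft d Ds (\<phi>t l) p * cnj (dft d Ds (\<phi> l) p / z)) = (\<Sum>x\<in>G. \<phi> l x * ?c l x)"
      by (simp only: Re_sum Re_of_real_mult)
    then have "(\<Sum>x\<in>G. \<phi> l x * ?c l x) = Re (dft d Ds (\<phi>t l) p * cnj (dft d Ds (\<phi> l) p / z))"
      by simp
    also have "\<dots> = Re (cnj (dft d Ds (\<phi>t l) p * cnj (dft d Ds (\<phi> l) p / z)))"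
      by (simp only: cnj.sel(1))
    also have "\<dots> = Re (dft d Ds (\<phi> l) p * cnj (dft d Ds (\<phi>t l) p) / z)"
      by (rule arg_cong[where f=Re]) (simp add: ac_simps)
    finally show "(\<Sum>x\<in>G. \<phi> l x * ?c l x) = Re (dft d Ds (\<phi> l) p * cnj (dft d Ds (\<phi>t l) p) / z)" .
  qed
  finally show ?thesis by (simp add: sum_distrib_left ac_simps)
qed

lemma pointwise_risk:
  assumes H: "dft d Ds h p \<noteq> 0"
  shows "(\<integral>\<omega>. (cmod (S_est \<omega> p - dft d Ds (s \<omega>) p))\<^sup>2 \<partial>M)
       = (\<integral>\<omega>. (cmod (S_est \<omega> p - dft d Ds (r \<omega>) p / dft d Ds h p))\<^sup>2 \<partial>M)
         - \<gamma> * real (gridsize d Ds) / (cmod (dft d Ds h p))\<^sup>2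
         + 2 * \<gamma> * (\<Sum>l=1..L. (\<integral>\<omega>. \<Theta>' l (rl l \<omega>) \<partial>M)
                * Re (dft d Ds (\<phi> l) p * cnj (dft d Ds (\<phi>t l) p) / dft d Ds h p))"
proof -
  define Hp where "Hp = dft d Ds h p"
  define A where "A \<omega> = S_est \<omega> p" for \<omega>
  define S where "S \<omega> = dft d Ds (s \<omega>) p" for \<omega>
  define N where "N \<omega> = dft d Ds (n \<omega>) p" for \<omega>
  have R: "dft d Ds (r \<omega>) p = Hp * S \<omega> + N \<omega>" for \<omega>
    by (simp add: dft_r Hp_def S_def N_def)
  have sq: "square_integrable M A" "square_integrable M S" "square_integrable M N"
    unfolding A_def[abs_def] S_def[abs_def] N_def[abs_def]
    by (rule square_integrable_S_est square_integrable_S square_integrable_N)+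
  have int_dev: "integrable M (\<lambda>\<omega>. (cmod (A \<omega> - (Hp * S \<omega> + N \<omega>) / Hp))\<^sup>2)"
    using sq by (intro square_integrable_norm2 square_integrable_diff square_integrable_divide
                       square_integrable_add square_integrable_const_mult)
  have int_cross: "integrable M (\<lambda>\<omega>. Re (A \<omega> * cnj (N \<omega> / Hp)))" "integrable M (\<lambda>\<omega>. Re (S \<omega> * cnj (N \<omega> / Hp)))"
    by (rule square_integrable_Re_mult_cnj[OF sq(1) square_integrable_divide[OF sq(3)]]
             square_integrable_Re_mult_cnj[OF sq(2) square_integrable_divide[OF sq(3)]])+
  have int_N: "integrable M (\<lambda>\<omega>. (cmod (N \<omega>))\<^sup>2 / (cmod Hp)\<^sup>2)"
    using sq(3) by (intro integrable_divide square_integrable_norm2)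
  have E_A: "(\<integral>\<omega>. Re (A \<omega> * cnj (N \<omega> / Hp)) \<partial>M)
      = \<gamma> * (\<Sum>l=1..L. (\<integral>\<omega>. \<Theta>' l (rl l \<omega>) \<partial>M) * Re (dft d Ds (\<phi> l) p * cnj (dft d Ds (\<phi>t l) p) / Hp))"
    unfolding A_def N_def by (rule estimate_noise_spectrum)
  have E_S: "(\<integral>\<omega>. Re (S \<omega> * cnj (N \<omega> / Hp)) \<partial>M) = 0"
    unfolding S_def N_def by (rule signal_noise_spectrum)
  have E_N: "(\<integral>\<omega>. (cmod (N \<omega>))\<^sup>2 \<partial>M) = \<gamma> * real (gridsize d Ds)"
    unfolding N_def by (rule noise_spectrum_power)
  have deconvolved: "(Hp * S \<omega> + N \<omega>) / Hp = dft d Ds (r \<omega>) p / Hp" for \<omega>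
    by (simp add: R)
  have "(\<integral>\<omega>. (cmod (A \<omega> - S \<omega>))\<^sup>2 \<partial>M)
      = (\<integral>\<omega>. (cmod (A \<omega> - (Hp * S \<omega> + N \<omega>) / Hp))\<^sup>2 + 2 * Re (A \<omega> * cnj (N \<omega> / Hp))
              - 2 * Re (S \<omega> * cnj (N \<omega> / Hp)) - (cmod (N \<omega>))\<^sup>2 / (cmod Hp)\<^sup>2 \<partial>M)"
    using H unfolding Hp_def by (intro Bochner_Integration.integral_cong refl cmod_power2_deconvolution_split)
  also have "\<dots> = (\<integral>\<omega>. (cmod (A \<omega> - (Hp * S \<omega> + N \<omega>) / Hp))\<^sup>2 \<partial>M)
      + 2 * (\<integral>\<omega>. Re (A \<omega> * cnj (N \<omega> / Hp)) \<partial>M) - 2 * (\<integral>\<omega>. Re (S \<omega> * cnj (N \<omega> / Hp)) \<partial>M)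
      - (\<integral>\<omega>. (cmod (N \<omega>))\<^sup>2 \<partial>M) / (cmod Hp)\<^sup>2"
    using int_dev int_cross int_N by simp
  also have "\<dots> = (\<integral>\<omega>. (cmod (A \<omega> - dft d Ds (r \<omega>) p / Hp))\<^sup>2 \<partial>M)
      + 2 * \<gamma> * (\<Sum>l=1..L. (\<integral>\<omega>. \<Theta>' l (rl l \<omega>) \<partial>M) * Re (dft d Ds (\<phi> l) p * cnj (dft d Ds (\<phi>t l) p) / Hp))
      - \<gamma> * real (gridsize d Ds) / (cmod Hp)\<^sup>2"
    unfolding E_A E_S E_N deconvolved by simp
  finally show ?thesis by (simp add: A_def S_def Hp_def)
qed

abbreviation shat_est :: "'a \<Rightarrow> (nat \<Rightarrow> nat) \<Rightarrow> real" where
  "shat_est \<omega> x \<equiv> \<Sum>l=1..L. \<Theta> l (rl l \<omega>) * \<phi>t l x"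

abbreviation stein_weight :: "nat \<Rightarrow> complex" where
  "stein_weight l \<equiv> (\<Sum>p\<in>G. dft d Ds (\<phi> l) p * cnj (dft d Ds (\<phi>t l) p) / dft d Ds h p)
                      / of_nat (gridsize d Ds)"

lemma dft_deconvolved:
  assumes p: "p \<in> G"
  shows "dft d Ds (\<lambda>x. Re (idft d Ds (\<lambda>q. dft d Ds (r \<omega>) q / dft d Ds h q) x)) p
       = dft d Ds (r \<omega>) p / dft d Ds h p"
  by (rule dft_Re_idft[OF Ds_pos p]) (simp add: dft_neg[OF Ds_pos] complex_cnj_divide)

lemma energy_risk:
  assumes H: "\<forall>p\<in>G. dft d Ds h p \<noteq> 0"
  shows "(\<integral>\<omega>. energy d Ds (\<lambda>x. shat_est \<omega> x - s \<omega> x) \<partial>M)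
       = (\<integral>\<omega>. energy d Ds (\<lambda>x. shat_est \<omega> x - Re (idft d Ds (\<lambda>q. dft d Ds (r \<omega>) q / dft d Ds h q) x)) \<partial>M)
         + \<gamma> / real (gridsize d Ds) *
           (2 * (\<Sum>l=1..L. (\<integral>\<omega>. \<Theta>' l (rl l \<omega>) \<partial>M) * Re (stein_weight l))
            - (\<Sum>p\<in>G. 1 / (cmod (dft d Ds h p))\<^sup>2))"
proof -
  let ?D = "real (gridsize d Ds)"
  let ?rt = "\<lambda>\<omega> x. Re (idft d Ds (\<lambda>q. dft d Ds (r \<omega>) q / dft d Ds h q) x)"
  define A where "A p = (\<integral>\<omega>. (cmod (S_est \<omega> p - dft d Ds (s \<omega>) p))\<^sup>2 \<partial>M)" for p
  define B where "B p = (\<integral>\<omega>. (cmod (S_est \<omega> p - dft d Ds (r \<omega>) p / dft d Ds h p))\<^sup>2 \<partial>M)" for p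
  define e where "e l = (\<integral>\<omega>. \<Theta>' l (rl l \<omega>) \<partial>M)" for l
  define c where "c l p = Re (dft d Ds (\<phi> l) p * cnj (dft d Ds (\<phi>t l) p) / dft d Ds h p)" for l p
  have D: "?D > 0" using gridsize_pos[OF Ds_pos] by simp
  have dft_shat: "dft d Ds (shat_est \<omega>) p = S_est \<omega> p" for \<omega> p
    by (rule dft_lincomb)
  have sq_Q: "square_integrable M (\<lambda>\<omega>. dft d Ds (r \<omega>) p / dft d Ds h p)" for p
    unfolding dft_r
    by (intro square_integrable_divide square_integrable_add square_integrable_N
              square_integrable_const_mult square_integrable_S)
  have spec_s: "dft d Ds (\<lambda>x. shat_est \<omega> x - s \<omega> x) p = S_est \<omega> p - dft d Ds (s \<omega>) p" for \<omega> p
    unfolding dft_diff dft_shat ..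
  have spec_rt: "dft d Ds (\<lambda>x. shat_est \<omega> x - ?rt \<omega> x) p = S_est \<omega> p - dft d Ds (r \<omega>) p / dft d Ds h p"
    if "p \<in> G" for \<omega> p
    unfolding dft_diff dft_shat dft_deconvolved[OF that] ..
  have energy_s: "(\<integral>\<omega>. energy d Ds (\<lambda>x. shat_est \<omega> x - s \<omega> x) \<partial>M) = (\<Sum>p\<in>G. A p) / ?D / ?D"
    unfolding A_def spec_s[symmetric]
    by (rule expected_energy_spectral[OF Ds_pos], unfold spec_s)
       (intro square_integrable_norm2 square_integrable_diff square_integrable_S_est square_integrable_S)
  have energy_rt: "(\<integral>\<omega>. energy d Ds (\<lambda>x. shat_est \<omega> x - ?rt \<omega> x) \<partial>M) = (\<Sum>p\<in>G. B p) / ?D / ?D"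
  proof -
    have "(\<integral>\<omega>. energy d Ds (\<lambda>x. shat_est \<omega> x - ?rt \<omega> x) \<partial>M)
        = (\<Sum>p\<in>G. \<integral>\<omega>. (cmod (dft d Ds (\<lambda>x. shat_est \<omega> x - ?rt \<omega> x) p))\<^sup>2 \<partial>M) / ?D / ?D"
      by (rule expected_energy_spectral[OF Ds_pos], unfold spec_rt)
         (intro square_integrable_norm2 square_integrable_diff square_integrable_S_est sq_Q)
    also have "(\<Sum>p\<in>G. \<integral>\<omega>. (cmod (dft d Ds (\<lambda>x. shat_est \<omega> x - ?rt \<omega> x) p))\<^sup>2 \<partial>M) = (\<Sum>p\<in>G. B p)"
      unfolding B_def by (intro sum.cong refl) (simp only: spec_rt)
    finally show ?thesis .
  qed
  have "(\<Sum>p\<in>G. A p) = (\<Sum>p\<in>G. B p - \<gamma> * ?D / (cmod (dft d Ds h p))\<^sup>2 + 2 * \<gamma> * (\<Sum>l=1..L. e l * c l p))"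
    unfolding A_def B_def e_def c_def by (intro sum.cong refl pointwise_risk) (use H in blast)
  also have "\<dots> = (\<Sum>p\<in>G. B p) - \<gamma> * ?D * (\<Sum>p\<in>G. 1 / (cmod (dft d Ds h p))\<^sup>2)
                   + 2 * \<gamma> * (\<Sum>p\<in>G. \<Sum>l=1..L. e l * c l p)"
    by (simp add: sum.distrib sum_subtractf sum_distrib_left)
  also have "(\<Sum>p\<in>G. \<Sum>l=1..L. e l * c l p) = (\<Sum>l=1..L. e l * (?D * Re (stein_weight l)))"
  proof -
    have "(\<Sum>p\<in>G. c l p) = ?D * Re (stein_weight l)" for l
      using D unfolding c_def by (simp add: Re_sum)
    then show ?thesis by (subst sum.swap) (simp only: sum_distrib_left[symmetric])
  qed
  finally have "(\<Sum>p\<in>G. A p) = (\<Sum>p\<in>G. B p) - \<gamma> * ?D * (\<Sum>p\<in>G. 1 / (cmod (dft d Ds h p))\<^sup>2)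
                   + 2 * \<gamma> * (?D * (\<Sum>l=1..L. e l * Re (stein_weight l)))"
    by (simp only: sum_distrib_left ac_simps)
  then have "(\<Sum>p\<in>G. A p) / ?D / ?D = (\<Sum>p\<in>G. B p) / ?D / ?D
      + \<gamma> / ?D * (2 * (\<Sum>l=1..L. e l * Re (stein_weight l)) - (\<Sum>p\<in>G. 1 / (cmod (dft d Ds h p))\<^sup>2))"
    using D by (simp add: field_simps)
  then show ?thesis unfolding energy_s energy_rt e_def .
qed

end

theorem proposition3:
  fixes M :: "'a measure" and d :: nat and Ds :: "nat \<Rightarrow> nat" and \<gamma> :: real and L :: nat
    and s n r :: "'a \<Rightarrow> (nat \<Rightarrow> nat) \<Rightarrow> real" and h :: "(nat \<Rightarrow> nat) \<Rightarrow> real"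
    and \<phi> \<phi>t :: "nat \<Rightarrow> (nat \<Rightarrow> nat) \<Rightarrow> real"
    and \<Theta> \<Theta>' :: "nat \<Rightarrow> real \<Rightarrow> real"
    and rl :: "nat \<Rightarrow> 'a \<Rightarrow> real"
    and shat rt :: "'a \<Rightarrow> (nat \<Rightarrow> nat) \<Rightarrow> real"
    and Shat :: "'a \<Rightarrow> (nat \<Rightarrow> nat) \<Rightarrow> complex"
    and gbar :: "nat \<Rightarrow> complex"
  assumes P: "prob_space M"
    and d_pos: "d \<ge> 1" and Ds_pos: "\<forall>i<d. Ds i > 0"
    and gamma_pos: "\<gamma> > 0" and L_pos: "L \<ge> 1"
    and s_meas: "\<forall>x\<in>grid d Ds. (\<lambda>\<omega>. s \<omega> x) \<in> borel_measurable M"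
    and s_var: "\<forall>x\<in>grid d Ds. integrable M (\<lambda>\<omega>. (s \<omega> x)\<^sup>2)"
    and n_normal: "\<forall>x\<in>grid d Ds. distributed M lborel (\<lambda>\<omega>. n \<omega> x) (normal_density 0 (sqrt \<gamma>))"
    and n_indep: "prob_space.indep_vars M (\<lambda>_. borel) (\<lambda>x \<omega>. n \<omega> x) (grid d Ds)"
    and sn_indep: "prob_space.indep_var M
         (Pi\<^sub>M (grid d Ds) (\<lambda>_. borel)) (\<lambda>\<omega>. restrict (s \<omega>) (grid d Ds))
         (Pi\<^sub>M (grid d Ds) (\<lambda>_. borel)) (\<lambda>\<omega>. restrict (n \<omega>) (grid d Ds))"
    and r_def: "r = (\<lambda>\<omega> x. circ_conv d Ds h (s \<omega>) x + n \<omega> x)"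
    and rl_def: "rl = (\<lambda>l \<omega>. ip d Ds (r \<omega>) (\<phi> l))"
    and shat_def: "shat = (\<lambda>\<omega> x. \<Sum>l=1..L. \<Theta> l (rl l \<omega>) * \<phi>t l x)"
    and Shat_def: "Shat = (\<lambda>\<omega> p. \<Sum>l=1..L. complex_of_real (\<Theta> l (rl l \<omega>)) * dft d Ds (\<phi>t l) p)"
    and Theta_cont: "\<forall>l\<in>{1..L}. continuous_on UNIV (\<Theta> l)"
    and Theta_diff: "\<forall>l\<in>{1..L}. AE x in lborel. (\<Theta> l has_real_derivative \<Theta>' l x) (at x)"
    and Theta_ac: "\<forall>l\<in>{1..L}. \<forall>a b. a \<le> b \<longrightarrow>
         set_integrable lborel {a..b} (\<Theta>' l) \<and>
         \<Theta> l b - \<Theta> l a = (\<integral>x\<in>{a..b}. \<Theta>' l x \<partial>lborel)"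
    and Theta_growth: "\<forall>l\<in>{1..L}. \<forall>\<alpha> \<tau>. \<alpha> \<noteq> 0 \<longrightarrow>
         ((\<lambda>\<zeta>. \<Theta> l (\<tau> + \<zeta>) * \<zeta>\<^sup>2 * exp (- (\<zeta>\<^sup>2) / (2 * \<alpha>\<^sup>2))) \<longlongrightarrow> 0) at_infinity"
    and Theta_mom: "\<forall>l\<in>{1..L}. integrable M (\<lambda>\<omega>. \<bar>\<Theta> l (rl l \<omega>)\<bar> ^ 3)"
    and Theta'_mom: "\<forall>l\<in>{1..L}. integrable M (\<lambda>\<omega>. \<bar>\<Theta>' l (rl l \<omega>)\<bar> ^ 3)"
    and H_nz: "\<forall>p\<in>grid d Ds. dft d Ds h p \<noteq> 0"
    and rt_def: "rt = (\<lambda>\<omega> x. Re (idft d Ds (\<lambda>p. dft d Ds (r \<omega>) p / dft d Ds h p) x))"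
    and gbar_def: "gbar = (\<lambda>l. (\<Sum>p\<in>grid d Ds. dft d Ds (\<phi> l) p * cnj (dft d Ds (\<phi>t l) p)
                                        / dft d Ds h p) / of_nat (gridsize d Ds))"
  shows "(\<forall>p\<in>grid d Ds.
            (\<integral>\<omega>. (cmod (Shat \<omega> p - dft d Ds (s \<omega>) p))\<^sup>2 \<partial>M)
          = (\<integral>\<omega>. (cmod (Shat \<omega> p - dft d Ds (r \<omega>) p / dft d Ds h p))\<^sup>2 \<partial>M)
            - \<gamma> * real (gridsize d Ds) / (cmod (dft d Ds h p))\<^sup>2
            + 2 * \<gamma> * (\<Sum>l=1..L. (\<integral>\<omega>. \<Theta>' l (rl l \<omega>) \<partial>M)
                   * Re (dft d Ds (\<phi> l) p * cnj (dft d Ds (\<phi>t l) p) / dft d Ds h p)))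
       \<and> (\<forall>l\<in>{1..L}. Im (gbar l) = 0)
       \<and> (\<integral>\<omega>. energy d Ds (\<lambda>x. shat \<omega> x - s \<omega> x) \<partial>M)
          = (\<integral>\<omega>. energy d Ds (\<lambda>x. shat \<omega> x - rt \<omega> x) \<partial>M)
            + \<gamma> / real (gridsize d Ds) *
              (2 * (\<Sum>l=1..L. (\<integral>\<omega>. \<Theta>' l (rl l \<omega>) \<partial>M) * Re (gbar l))
               - (\<Sum>p\<in>grid d Ds. 1 / (cmod (dft d Ds h p))\<^sup>2))"
proof -
  interpret observation_model M d Ds \<gamma> L s n r h \<phi> \<phi>t \<Theta> \<Theta>' rl
    using P Ds_pos gamma_pos s_meas s_var n_normal n_indep sn_indep r_def rl_def Theta_cont
      Theta_ac Theta_mom Theta'_mom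
    by (intro observation_model.intro observation_model_axioms.intro) (simp_all add: abs_cont_deriv_def)
  have "Im (gbar l) = 0" for l
    unfolding gbar_def using mean_cross_spectrum_ratio_real[OF Ds_pos] by simp
  then show ?thesis
    unfolding Shat_def shat_def rt_def
    using pointwise_risk H_nz energy_risk[OF H_nz] by (simp add: gbar_def)
qed

end
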